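(* Let $H$ be a real or complex Hilbert space of dimension $n$, let $N\ge n$, let $F=\{f_i\}_{i=1}^N$ be a frame for $H$ with frame operator $S_F$, and let $\{q_i\}_{i=1}^N$ be a weight number sequence. Set $c=\max\{q_i\|S_F^{-1/2}f_i\|^2:1\le i\le N\}$, $\Upsilon_1=\{i:q_i\|S_F^{-1/2}f_i\|^2=c\}$, $\Upsilon_2=\{1,\dots,N\}\setminus\Upsilon_1$, and $H_j=\operatorname{span}\{f_i:i\in\Upsilon_j\}$ for $j=1,2$. Suppose $H_1\cap H_2=\{0\}$ and $|\Upsilon_1|\ge2$. Suppose also that for all $i\neq j$ $$\big|\langle S_F^{-1/2}f_i,S_F^{-1/2}f_j\rangle\big|=\sqrt{\frac{1}{q_iq_j}\cdot\frac{n-\sum_{k=1}^N\frac{1}{q_k^2}}{\sum_{r\ne s}\frac{1}{q_rq_s}}}.$$ Then the canonical dual $\{S_F^{-1}f_i\}_{i=1}^N$ is a 2-erasure probabilistic spectrally optimal dual of $F$.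
   Context: Inner products are linear in the first argument. A frame for $H$ is a finite sequence spanning $H$. Analysis operator: $\Theta_F f=(\langle f,f_i\rangle)_i$. Synthesis operator: $\Theta_G^*(c)=\sum_i c_ig_i$. Frame operator: $S_F=\Theta_F^*\Theta_F$. A dual of $F$ is a frame $G=\{g_i\}_{i=1}^N$ with $f=\sum_i\langle f,f_i\rangle g_i=\sum_i\langle f,g_i\rangle f_i$ for all $f$. A probability sequence satisfies $0\le p_i\le1$ and $\sum p_i=1$. Weight numbers: $q_i=\frac{\sum_j p_j}{\sum_j p_j-p_i}\cdot\frac{N-1}{n}$ (assumed well defined). For $m\in\{1,2\}$, $\mathcal{D}_m^p$ is the set of $N\times N$ diagonal matrices $D$ for which there is $\Lambda\subseteq\{1,\dots,N\}$ with $|\Lambda|=m$, $D_{ii}=q_i$ for $i\in\Lambda$ and $0$ otherwise. $\mathcal{R}_m^p(F,G)=\max\{\rho(\Theta_G^*D\Theta_F):D\in\mathcal{D}_m^p\}$, with $\rho$ the spectral radius. A dual $G$ is a 1-erasure probabilistic spectrally optimal dual of $F$ if $\mathcal{R}_1^p(F,G)=\inf\{\mathcal{R}_1^p(F,G'): G'\text{ a dual of }F\}$. A dual $G$ is a 2-erasure probabilistic spectrally optimal dual of $F$ if it is a 1-erasure probabilistic spectrally optimal dual of $F$ and $\mathcal{R}_2^p(F,G)=\inf\{\mathcal{R}_2^p(F,G'): G'\text{ a 1-erasure probabilistic spectrally optimal dual of }F\}$. The sum $\sum_{r\ne s}$ runs over ordered pairs $(r,s)$ with $r\ne s$. *)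

theory Defs
  imports "Jordan_Normal_Form.Spectral_Radius"
begin

text \<open>The n-dimensional Hilbert space H is modelled as K^n inside complex^n, where the
  scalar field K is either the reals (real Hilbert space) or all of the complex numbers.
  Inner product: v \<bullet>c w = sum of v_k * cnj (w_k), linear in the first argument.
  Sequences are indexed by 0..N-1.\<close>

definition inH :: "complex set \<Rightarrow> nat \<Rightarrow> complex vec \<Rightarrow> bool" where
  "inH K n v \<longleftrightarrow> v \<in> carrier_vec n \<and> (\<forall>k<n. v $ k \<in> K)"

definition lincomb_seq :: "nat \<Rightarrow> (nat \<Rightarrow> complex) \<Rightarrow> (nat \<Rightarrow> complex vec) \<Rightarrow> nat set \<Rightarrow> complex vec" where
  "lincomb_seq n c f A = vec n (\<lambda>k. \<Sum>i\<in>A. c i * (f i $ k))"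

definition spanK :: "complex set \<Rightarrow> nat \<Rightarrow> (nat \<Rightarrow> complex vec) \<Rightarrow> nat set \<Rightarrow> complex vec set" where
  "spanK K n f A = {lincomb_seq n c f A | c. \<forall>i\<in>A. c i \<in> K}"

definition is_frame :: "complex set \<Rightarrow> nat \<Rightarrow> nat \<Rightarrow> (nat \<Rightarrow> complex vec) \<Rightarrow> bool" where
  "is_frame K n N f \<longleftrightarrow> (\<forall>i<N. inH K n (f i)) \<and> spanK K n f {..<N} = {v. inH K n v}"

definition analysis_op :: "nat \<Rightarrow> nat \<Rightarrow> (nat \<Rightarrow> complex vec) \<Rightarrow> complex mat" where
  "analysis_op n N f = mat N n (\<lambda>(i,k). cnj (f i $ k))"

definition synthesis_op :: "nat \<Rightarrow> nat \<Rightarrow> (nat \<Rightarrow> complex vec) \<Rightarrow> complex mat" where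
  "synthesis_op n N g = mat n N (\<lambda>(k,i). g i $ k)"

definition frame_op :: "nat \<Rightarrow> nat \<Rightarrow> (nat \<Rightarrow> complex vec) \<Rightarrow> complex mat" where
  "frame_op n N f = synthesis_op n N f * analysis_op n N f"

definition is_dual :: "complex set \<Rightarrow> nat \<Rightarrow> nat \<Rightarrow> (nat \<Rightarrow> complex vec) \<Rightarrow> (nat \<Rightarrow> complex vec) \<Rightarrow> bool" where
  "is_dual K n N f g \<longleftrightarrow> is_frame K n N g \<and>
     (\<forall>v. inH K n v \<longrightarrow> v = lincomb_seq n (\<lambda>i. v \<bullet>c f i) g {..<N}
                       \<and> v = lincomb_seq n (\<lambda>i. v \<bullet>c g i) f {..<N})"

definition prob_seq :: "nat \<Rightarrow> (nat \<Rightarrow> real) \<Rightarrow> bool" where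
  "prob_seq N p \<longleftrightarrow> (\<forall>i<N. 0 \<le> p i \<and> p i \<le> 1) \<and> (\<Sum>i<N. p i) = 1"

definition weight_num :: "nat \<Rightarrow> nat \<Rightarrow> (nat \<Rightarrow> real) \<Rightarrow> nat \<Rightarrow> real" where
  "weight_num n N p i = (\<Sum>j<N. p j) / ((\<Sum>j<N. p j) - p i) * (real N - 1) / real n"

definition Dset :: "nat \<Rightarrow> nat \<Rightarrow> (nat \<Rightarrow> real) \<Rightarrow> nat \<Rightarrow> complex mat set" where
  "Dset n N p m = {mat N N (\<lambda>(i,j). if i = j \<and> i \<in> \<Lambda> then complex_of_real (weight_num n N p i) else 0)
                   | \<Lambda>. \<Lambda> \<subseteq> {..<N} \<and> card \<Lambda> = m}"

definition Rm :: "nat \<Rightarrow> nat \<Rightarrow> (nat \<Rightarrow> real) \<Rightarrow> nat \<Rightarrow> (nat \<Rightarrow> complex vec) \<Rightarrow> (nat \<Rightarrow> complex vec) \<Rightarrow> real" where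
  "Rm n N p m f g = Max ((\<lambda>D. spectral_radius (synthesis_op n N g * D * analysis_op n N f)) ` Dset n N p m)"

definition opt1_dual :: "complex set \<Rightarrow> nat \<Rightarrow> nat \<Rightarrow> (nat \<Rightarrow> real) \<Rightarrow> (nat \<Rightarrow> complex vec) \<Rightarrow> (nat \<Rightarrow> complex vec) \<Rightarrow> bool" where
  "opt1_dual K n N p f g \<longleftrightarrow> is_dual K n N f g \<and>
     Rm n N p 1 f g = (INF g'\<in>{g'. is_dual K n N f g'}. Rm n N p 1 f g')"

definition opt2_dual :: "complex set \<Rightarrow> nat \<Rightarrow> nat \<Rightarrow> (nat \<Rightarrow> real) \<Rightarrow> (nat \<Rightarrow> complex vec) \<Rightarrow> (nat \<Rightarrow> complex vec) \<Rightarrow> bool" where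
  "opt2_dual K n N p f g \<longleftrightarrow> opt1_dual K n N p f g \<and>
     Rm n N p 2 f g = (INF g'\<in>{g'. opt1_dual K n N p f g'}. Rm n N p 2 f g')"

definition adj :: "complex mat \<Rightarrow> complex mat" where
  "adj A = mat (dim_col A) (dim_row A) (\<lambda>(i,j). cnj (A $$ (j,i)))"

definition pos_def_mat :: "nat \<Rightarrow> complex mat \<Rightarrow> bool" where
  "pos_def_mat n A \<longleftrightarrow> A \<in> carrier_mat n n \<and> adj A = A \<and>
     (\<forall>v\<in>carrier_vec n. v \<noteq> 0\<^sub>v n \<longrightarrow> Re ((A *\<^sub>v v) \<bullet>c v) > 0)"

definition mat_inv :: "nat \<Rightarrow> complex mat \<Rightarrow> complex mat" where
  "mat_inv n S = (THE B. B \<in> carrier_mat n n \<and> B * S = 1\<^sub>m n)"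

definition inv_sqrt_mat :: "nat \<Rightarrow> complex mat \<Rightarrow> complex mat" where
  "inv_sqrt_mat n S = (THE R. pos_def_mat n R \<and> R * R * S = 1\<^sub>m n)"

definition vnorm :: "complex vec \<Rightarrow> real" where
  "vnorm v = sqrt (\<Sum>k<dim_vec v. (cmod (v $ k))^2)"

end

(* Write q_i for the weights, a_i = ||S^(-1/2) f_i||^2 = <S^(-1) f_i, f_i>, and g for the canonical
   dual g_i = S^(-1) f_i.  A single erasure at i leaves the rank-one operator q_i g_i f_i^*, whose
   spectral radius is q_i |<g_i, f_i>|; so the canonical dual attains R_1 = c.  For an arbitrary dual G
   the projection Q onto H_1 along H_2 (which exists since H_1 and H_2 meet only in 0) satisfies
   sum_i <G_i, Q f_i> = conj (trace Q), hence sum_{i in U1} <G_i, f_i> does not depend on G.  This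
   forces R_1(G) >= c, with equality only if <G_i, f_i> = c / q_i for all i in U1.

   Pairing the reconstruction formula with Q^* G_j gives sum_{i in U1} <G_j, f_i><G_i, f_j> = <G_j, f_j>
   for j in U1, so among 1-optimal duals the products q_i q_j <G_j, f_i><G_i, f_j> over i in U1 - {j}
   have a fixed sum.  For the canonical dual each of them equals
   kappa = q_i q_j |<S^(-1/2) f_i, S^(-1/2) f_j>|^2, which the hypothesis makes independent of i and j
   (its particular value plays no role).  Hence every 1-optimal dual has a pair i, j in U1 whose
   product has real part at least kappa, and its 2-erasure operator on {i, j} has the eigenvalue
   c + sqrt(q_i q_j <G_j, f_i><G_i, f_j>), of modulus at least c + sqrt kappa.  For the canonical dual
   every nonzero 2-erasure eigenvalue l satisfies (l - q_i a_i)(l - q_j a_j) = kappa or l = q_i a_i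
   or l = q_j a_j, whence |l| <= c + sqrt kappa. *)

theory Submission
  imports Defs
begin

section \<open>Adjoints and the complex inner product\<close>

lemma adj_carrier_mat [simp]: "A \<in> carrier_mat m n \<Longrightarrow> adj A \<in> carrier_mat n m"
  unfolding adj_def by auto

lemma adj_mult_mat_vec_carrier [simp]: "A \<in> carrier_mat m n \<Longrightarrow> v \<in> carrier_vec m \<Longrightarrow> adj A *\<^sub>v v \<in> carrier_vec n"
  by (rule mult_mat_vec_carrier[OF adj_carrier_mat])

lemma adj_dim [simp]: "dim_row (adj A) = dim_col A" "dim_col (adj A) = dim_row A"
  unfolding adj_def by auto

lemma adj_index [simp]: "i < dim_col A \<Longrightarrow> j < dim_row A \<Longrightarrow> adj A $$ (i,j) = cnj (A $$ (j,i))"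
  unfolding adj_def by auto

lemma adj_adj [simp]: "adj (adj A) = A"
  by (intro eq_matI) (auto simp: adj_def)

lemma adj_one [simp]: "adj (1\<^sub>m n) = 1\<^sub>m n"
  by (intro eq_matI) (auto simp: adj_def)

lemma index_mult_mat_sum:
  "A \<in> carrier_mat m k \<Longrightarrow> B \<in> carrier_mat k n \<Longrightarrow> i < m \<Longrightarrow> j < n \<Longrightarrow>
   (A * B) $$ (i,j) = (\<Sum>l<k. A $$ (i,l) * B $$ (l,j))"
  by (auto simp: scalar_prod_def row_def col_def atLeast0LessThan)

lemma index_mult_mat_vec_sum:
  "A \<in> carrier_mat m k \<Longrightarrow> v \<in> carrier_vec k \<Longrightarrow> i < m \<Longrightarrow> (A *\<^sub>v v) $ i = (\<Sum>l<k. A $$ (i,l) * v $ l)"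
  by (auto simp: scalar_prod_def row_def atLeast0LessThan)

lemma row_scalar_prod_sum [simp]:
  "A \<in> carrier_mat m k \<Longrightarrow> v \<in> carrier_vec k \<Longrightarrow> i < m \<Longrightarrow> row A i \<bullet> v = (\<Sum>l<k. A $$ (i,l) * v $ l)"
  by (auto simp: scalar_prod_def row_def atLeast0LessThan)

lemma row_adj_scalar_prod_sum [simp]:
  "A \<in> carrier_mat m n \<Longrightarrow> w \<in> carrier_vec m \<Longrightarrow> i < n \<Longrightarrow>
   row (adj A) i \<bullet> w = (\<Sum>l<m. cnj (A $$ (l,i)) * w $ l)"
  by (auto simp: scalar_prod_def row_def adj_def atLeast0LessThan)

lemma cscalar_prod_sum: "w \<in> carrier_vec n \<Longrightarrow> v \<bullet>c w = (\<Sum>i<n. v $ i * cnj (w $ i))"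
  by (auto simp: scalar_prod_def atLeast0LessThan)

lemma adj_mult:
  assumes "A \<in> carrier_mat m k" "B \<in> carrier_mat k n"
  shows "adj (A * B) = adj B * adj A"
proof (rule eq_matI)
  fix i j assume "i < dim_row (adj B * adj A)" "j < dim_col (adj B * adj A)"
  with assms have i: "i < n" and j: "j < m" by auto
  have "adj (A * B) $$ (i,j) = cnj (\<Sum>l<k. A $$ (j,l) * B $$ (l,i))"
    using assms i j by (simp add: index_mult_mat_sum)
  also have "\<dots> = (\<Sum>l<k. adj B $$ (i,l) * adj A $$ (l,j))"
    using assms i j by (auto simp: mult.commute intro!: sum.cong)
  also have "\<dots> = (adj B * adj A) $$ (i,j)"
    using assms i j by (subst index_mult_mat_sum[of _ n k _ m]) auto
  finally show "adj (A * B) $$ (i,j) = (adj B * adj A) $$ (i,j)" .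
qed (use assms in auto)

lemma cscalar_prod_adj:
  assumes A: "A \<in> carrier_mat m n" and v: "v \<in> carrier_vec n" and w: "w \<in> carrier_vec m"
  shows "(A *\<^sub>v v) \<bullet>c w = v \<bullet>c (adj A *\<^sub>v w)"
proof -
  have "(A *\<^sub>v v) \<bullet>c w = (\<Sum>i<m. \<Sum>l<n. A $$ (i,l) * v $ l * cnj (w $ i))"
    using assms by (simp add: cscalar_prod_sum[of _ m] index_mult_mat_vec_sum sum_distrib_right)
  also have "\<dots> = (\<Sum>l<n. \<Sum>i<m. A $$ (i,l) * v $ l * cnj (w $ i))"
    by (rule sum.swap)
  also have "\<dots> = (\<Sum>l<n. v $ l * cnj (\<Sum>i<m. adj A $$ (l,i) * w $ i))"
    using assms by (auto simp: sum_distrib_left mult_ac intro!: sum.cong)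
  also have "\<dots> = v \<bullet>c (adj A *\<^sub>v w)"
    using assms by (simp add: cscalar_prod_sum[of "adj A *\<^sub>v w" n] sum_distrib_left mult_ac)
  finally show ?thesis .
qed

lemma cscalar_prod_smult_left:
  "v \<in> carrier_vec n \<Longrightarrow> w \<in> carrier_vec n \<Longrightarrow> (a \<cdot>\<^sub>v v) \<bullet>c w = a * (v \<bullet>c w :: complex)"
  by (simp add: cscalar_prod_sum[of w n] sum_distrib_left mult_ac)

lemma cscalar_prod_smult_right:
  "v \<in> carrier_vec n \<Longrightarrow> w \<in> carrier_vec n \<Longrightarrow> v \<bullet>c (a \<cdot>\<^sub>v w) = cnj a * (v \<bullet>c w :: complex)"
  by (simp add: cscalar_prod_sum[of _ n] sum_distrib_left mult_ac)

lemma cscalar_prod_swap: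
  "v \<in> carrier_vec n \<Longrightarrow> w \<in> carrier_vec n \<Longrightarrow> w \<bullet>c v = cnj (v \<bullet>c w :: complex)"
  by (simp add: cscalar_prod_sum[of _ n] mult.commute)

lemma cscalar_prod_unit_vec:
  fixes v :: "complex vec"
  shows "v \<in> carrier_vec n \<Longrightarrow> k < n \<Longrightarrow> v \<bullet>c unit_vec n k = v $ k"
proof -
  assume v: "v \<in> carrier_vec n" and k: "k < n"
  have "v \<bullet>c unit_vec n k = (\<Sum>i<n. v $ i * cnj (unit_vec n k $ i))" by (rule cscalar_prod_sum) simp
  also have "\<dots> = (\<Sum>i<n. if i = k then v $ i else 0)" by (rule sum.cong) (use k in auto)
  also have "\<dots> = v $ k" using k by simp
  finally show ?thesis .
qed

lemma cscalar_prod_self: "w \<in> carrier_vec n \<Longrightarrow> w \<bullet>c w = of_real (\<Sum>i<n. (cmod (w $ i))\<^sup>2)"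
proof -
  assume w: "w \<in> carrier_vec n"
  have "w \<bullet>c w = (\<Sum>i<n. w $ i * cnj (w $ i))" by (rule cscalar_prod_sum[OF w])
  also have "\<dots> = (\<Sum>i<n. of_real ((cmod (w $ i))\<^sup>2))"
    by (rule sum.cong[OF refl]) (simp only: complex_norm_square)
  also have "\<dots> = of_real (\<Sum>i<n. (cmod (w $ i))\<^sup>2)" by (simp only: of_real_sum)
  finally show ?thesis .
qed

lemma sum_cmod_square_pos:
  assumes w: "w \<in> carrier_vec n" and nz: "w \<noteq> 0\<^sub>v n"
  shows "(\<Sum>i<n. (cmod (w $ i))\<^sup>2) > 0"
proof -
  from nz w obtain i where i: "i < n" "w $ i \<noteq> 0"
    by (metis carrier_vecD eq_vecI index_zero_vec(1) index_zero_vec(2))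
  have "0 < (cmod (w $ i))\<^sup>2" using i by simp
  also have "\<dots> \<le> (\<Sum>i<n. (cmod (w $ i))\<^sup>2)" by (rule member_le_sum) (use i in auto)
  finally show ?thesis .
qed

lemma hermitian_form_real:
  assumes S: "S \<in> carrier_mat n n" and h: "adj S = S" and w: "w \<in> carrier_vec n"
  shows "Im ((S *\<^sub>v w) \<bullet>c w) = 0"
proof -
  have Sw: "S *\<^sub>v w \<in> carrier_vec n" using S w by simp
  have "(S *\<^sub>v w) \<bullet>c w = w \<bullet>c (S *\<^sub>v w)" using cscalar_prod_adj[OF S w w] h by simp
  also have "\<dots> = cnj ((S *\<^sub>v w) \<bullet>c w)" by (rule cscalar_prod_swap[OF Sw w])
  finally have "(S *\<^sub>v w) \<bullet>c w = cnj ((S *\<^sub>v w) \<bullet>c w)" .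
  thus ?thesis by (metis Reals_cnj_iff complex_is_Real_iff)
qed

section \<open>The spectral theorem for Hermitian matrices\<close>

lemma hermitian_square_zero:
  assumes C: "C \<in> carrier_mat n n" and h: "adj C = C" and z: "C * C = 0\<^sub>m n n"
  shows "C = 0\<^sub>m n n"
proof (rule eq_matI)
  fix i j assume "i < dim_row (0\<^sub>m n n)" "j < dim_col (0\<^sub>m n n)"
  hence i: "i < n" and j: "j < n" by auto
  have sym: "C $$ (b,a) = cnj (C $$ (a,b))" if "a < n" "b < n" for a b
  proof -
    have "adj C $$ (b,a) = cnj (C $$ (a,b))" using C that by simp
    thus "C $$ (b,a) = cnj (C $$ (a,b))" using h by simp
  qed
  have "(C * C) $$ (i,i) = 0" using z i by simp
  hence s1: "(\<Sum>l<n. C $$ (i,l) * C $$ (l,i)) = 0" using C i by (simp add: index_mult_mat_sum)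
  have h2: "C $$ (i,l) * C $$ (l,i) = complex_of_real ((cmod (C $$ (i,l)))^2)" if "l < n" for l
    by (simp only: sym[of i l, OF i that] complex_norm_square)
  have "(\<Sum>l<n. C $$ (i,l) * C $$ (l,i)) = (\<Sum>l<n. complex_of_real ((cmod (C $$ (i,l)))^2))"
    by (rule sum.cong[OF refl]) (use h2 in blast)
  hence "complex_of_real (\<Sum>l<n. (cmod (C $$ (i,l)))^2) = 0" using s1 by (simp only: of_real_sum)
  hence "(\<Sum>l<n. (cmod (C $$ (i,l)))^2) = 0" by (simp only: of_real_eq_0_iff)
  hence "\<forall>l\<in>{..<n}. (cmod (C $$ (i,l)))^2 = 0"
    by (subst sum_nonneg_eq_0_iff[symmetric]) auto
  thus "C $$ (i,j) = 0\<^sub>m n n $$ (i,j)" using i j by auto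
qed (use C in auto)

lemma pow_mat_add:
  assumes A: "A \<in> carrier_mat n n"
  shows "A ^\<^sub>m (a + b) = A ^\<^sub>m a * A ^\<^sub>m b"
proof (induction b)
  case 0
  then show ?case using A by simp
next
  case (Suc b)
  have "A ^\<^sub>m (a + Suc b) = (A ^\<^sub>m a * A ^\<^sub>m b) * A" using Suc by simp
  also have "\<dots> = A ^\<^sub>m a * (A ^\<^sub>m b * A)"
    by (rule assoc_mult_mat[of _ n n _ n _ n]) (use A in auto)
  finally show ?case by simp
qed

lemma adj_pow:
  assumes A: "A \<in> carrier_mat n n" and h: "adj A = A"
  shows "adj (A ^\<^sub>m k) = A ^\<^sub>m k"
proof (induction k)
  case 0
  then show ?case using A by simp
next
  case (Suc k)
  have "adj (A ^\<^sub>m Suc k) = adj (A ^\<^sub>m k * A)" by simp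
  also have "\<dots> = adj A * adj (A ^\<^sub>m k)" by (rule adj_mult[of _ n n _ n]) (use A in auto)
  also have "\<dots> = A ^\<^sub>m 1 * A ^\<^sub>m k" using Suc h A by simp
  also have "\<dots> = A ^\<^sub>m (1 + k)" using pow_mat_add[OF A, of 1 k] by simp
  also have "\<dots> = A ^\<^sub>m Suc k" by simp
  finally show ?case .
qed

lemma strictly_upper_pow_index:
  assumes B: "B \<in> carrier_mat n n"
    and z: "\<And>i j. i < n \<Longrightarrow> j < n \<Longrightarrow> j \<le> i \<Longrightarrow> B $$ (i,j) = 0"
  shows "i < n \<Longrightarrow> j < n \<Longrightarrow> j < i + k \<Longrightarrow> (B ^\<^sub>m k) $$ (i,j) = 0"
proof (induction k arbitrary: i j)
  case 0
  then show ?case using B by simp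
next
  case (Suc k)
  have "(B ^\<^sub>m Suc k) $$ (i,j) = (B ^\<^sub>m k * B) $$ (i,j)" by simp
  also have "\<dots> = (\<Sum>l<n. (B ^\<^sub>m k) $$ (i,l) * B $$ (l,j))"
    by (rule index_mult_mat_sum[OF pow_carrier_mat[OF B] B]) (use Suc.prems in auto)
  also have "\<dots> = 0"
  proof (rule sum.neutral, rule ballI)
    fix l assume l: "l \<in> {..<n}"
    show "(B ^\<^sub>m k) $$ (i,l) * B $$ (l,j) = 0"
    proof (cases "l < i + k")
      case True
      then show ?thesis using Suc.IH[of i l] Suc.prems l by simp
    next
      case False
      then show ?thesis using z[of l j] Suc.prems l by simp
    qed
  qed
  finally show ?case .
qed

lemma strictly_upper_nilpotent:
  assumes B: "B \<in> carrier_mat n n"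
    and z: "\<And>i j. i < n \<Longrightarrow> j < n \<Longrightarrow> j \<le> i \<Longrightarrow> B $$ (i,j) = 0"
  shows "B ^\<^sub>m n = 0\<^sub>m n n"
  by (rule eq_matI) (use strictly_upper_pow_index[OF B z] B in auto)

lemma hermitian_nilpotent_zero:
  assumes C: "C \<in> carrier_mat n n" and h: "adj C = C"
  shows "C ^\<^sub>m k = 0\<^sub>m n n \<Longrightarrow> C = 0\<^sub>m n n"
proof (induction k rule: less_induct)
  case (less k)
  show ?case
  proof (cases k)
    case 0
    hence "1\<^sub>m n = (0\<^sub>m n n :: complex mat)" using less.prems C by simp
    hence "n = 0" by (metis index_one_mat(1) index_zero_mat(1) neq0_conv zero_neq_one)
    thus ?thesis using C by (intro eq_matI) auto
  next
    case (Suc k')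
    show ?thesis
    proof (cases k')
      case 0
      then show ?thesis using less.prems C Suc by simp
    next
      case (Suc k'')
      define M where "M = C ^\<^sub>m k'"
      have M: "M \<in> carrier_mat n n" using C M_def by simp
      have hM: "adj M = M" unfolding M_def by (rule adj_pow[OF C h])
      have "M * M = C ^\<^sub>m (k' + k')" unfolding M_def by (rule pow_mat_add[OF C, symmetric])
      also have "k' + k' = k + k''" using \<open>k = Suc k'\<close> Suc by simp
      also have "C ^\<^sub>m (k + k'') = C ^\<^sub>m k * C ^\<^sub>m k''" by (rule pow_mat_add[OF C])
      also have "\<dots> = 0\<^sub>m n n" using less.prems C by simp
      finally have "M = 0\<^sub>m n n" by (rule hermitian_square_zero[OF M hM])
      thus ?thesis using less.IH[of k'] \<open>k = Suc k'\<close> unfolding M_def by simp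
    qed
  qed
qed

lemma hermitian_nonzero_eigenvalue:
  assumes C: "C \<in> carrier_mat n n" and h: "adj C = C" and nz: "C \<noteq> 0\<^sub>m n n"
  shows "\<exists>\<mu> w. \<mu> \<noteq> 0 \<and> w \<in> carrier_vec n \<and> w \<noteq> 0\<^sub>v n \<and> C *\<^sub>v w = \<mu> \<cdot>\<^sub>v w"
proof -
  obtain es where es: "char_poly C = (\<Prod>a\<leftarrow>es. [:- a, 1:])" and len: "length es = n"
    using char_poly_factorized[OF C] by auto
  show ?thesis
  proof (cases "\<exists>e\<in>set es. e \<noteq> 0")
    case True
    then obtain e where e: "e \<in> set es" "e \<noteq> 0" by auto
    have "poly (char_poly C) e = 0" unfolding es using linear_poly_root[OF e(1)] .
    hence "eigenvalue C e" using eigenvalue_root_char_poly[OF C] by simp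
    then obtain w where "eigenvector C w e" unfolding eigenvalue_def by auto
    thus ?thesis using e C unfolding eigenvector_def by auto
  next
    case False
    obtain B P Q where sd: "schur_decomposition C es = (B,P,Q)" by (cases "schur_decomposition C es") auto
    from schur_decomposition[OF C es sd]
    have wit: "similar_mat_wit C B P Q" and ut: "upper_triangular B" and dg: "diag_mat B = es" by auto
    from similar_mat_witD2[OF C wit] have B: "B \<in> carrier_mat n n" and P: "P \<in> carrier_mat n n"
      and Q: "Q \<in> carrier_mat n n" by auto
    have z: "B $$ (i,j) = 0" if "i < n" "j < n" "j \<le> i" for i j
    proof (cases "j = i")
      case True
      have "B $$ (i,i) = es ! i" using dg B that unfolding diag_mat_def by auto
      moreover have "es ! i \<in> set es" using len that by simp
      ultimately show ?thesis using False True by auto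
    next
      case False
      then show ?thesis using ut B that unfolding upper_triangular_def by auto
    qed
    have "C ^\<^sub>m n = P * B ^\<^sub>m n * Q" by (rule similar_mat_wit_pow_id[OF wit])
    also have "\<dots> = 0\<^sub>m n n" using strictly_upper_nilpotent[OF B z] P Q by simp
    finally have "C = 0\<^sub>m n n" by (rule hermitian_nilpotent_zero[OF C h])
    with nz show ?thesis by simp
  qed
qed

definition orthonormal :: "nat \<Rightarrow> complex vec list \<Rightarrow> bool" where
  "orthonormal n us \<longleftrightarrow> (\<forall>u\<in>set us. u \<in> carrier_vec n) \<and>
     (\<forall>k<length us. \<forall>l<length us. us ! k \<bullet>c us ! l = (if k = l then 1 else 0))"

definition orth_compl_proj :: "nat \<Rightarrow> complex vec list \<Rightarrow> complex mat" where
  "orth_compl_proj n us = mat n n (\<lambda>(i,j). (if i = j then 1 else 0) - (\<Sum>k<length us. us ! k $ i * cnj (us ! k $ j)))"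

lemma orth_compl_proj_carrier[simp]: "orth_compl_proj n us \<in> carrier_mat n n"
  unfolding orth_compl_proj_def by simp

lemma orth_compl_proj_dim[simp]: "dim_row (orth_compl_proj n us) = n" "dim_col (orth_compl_proj n us) = n"
  unfolding orth_compl_proj_def by auto

lemma orth_compl_proj_apply:
  assumes w: "w \<in> carrier_vec n" and on: "orthonormal n us" and i: "i < n"
  shows "(orth_compl_proj n us *\<^sub>v w) $ i = w $ i - (\<Sum>k<length us. (w \<bullet>c us ! k) * us ! k $ i)"
proof -
  have uk: "\<And>k. k < length us \<Longrightarrow> us ! k \<in> carrier_vec n" using on unfolding orthonormal_def by auto
  have "(orth_compl_proj n us *\<^sub>v w) $ i = (\<Sum>j<n. ((if i = j then 1 else 0) - (\<Sum>k<length us. us ! k $ i * cnj (us ! k $ j))) * w $ j)"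
    using w i by (simp add: orth_compl_proj_def scalar_prod_def atLeast0LessThan)
  also have "\<dots> = (\<Sum>j<n. (if i = j then 1 else 0) * w $ j) - (\<Sum>j<n. \<Sum>k<length us. us ! k $ i * cnj (us ! k $ j) * w $ j)"
    by (simp add: left_diff_distrib sum_subtractf sum_distrib_right)
  also have "(\<Sum>j<n. (if i = j then 1 else 0) * w $ j) = (\<Sum>j<n. (if i = j then w $ j else 0))"
    by (rule sum.cong) auto
  also have "\<dots> = w $ i" using i by simp
  also have "(\<Sum>j<n. \<Sum>k<length us. us ! k $ i * cnj (us ! k $ j) * w $ j)
     = (\<Sum>k<length us. \<Sum>j<n. us ! k $ i * cnj (us ! k $ j) * w $ j)" by (rule sum.swap)
  also have "\<dots> = (\<Sum>k<length us. (w \<bullet>c us ! k) * us ! k $ i)"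
    by (rule sum.cong[OF refl]) (simp add: cscalar_prod_sum[OF uk] sum_distrib_left sum_distrib_right mult_ac)
  finally show ?thesis .
qed

lemma orth_compl_proj_apply_row[simp]:
  assumes w: "w \<in> carrier_vec n" and on: "orthonormal n us" and i: "i < n"
  shows "row (orth_compl_proj n us) i \<bullet> w = w $ i - (\<Sum>k<length us. (w \<bullet>c us ! k) * us ! k $ i)"
  using orth_compl_proj_apply[OF w on i] w i by simp

lemma orth_compl_proj_orth:
  assumes w: "w \<in> carrier_vec n" and on: "orthonormal n us" and l: "l < length us"
  shows "(orth_compl_proj n us *\<^sub>v w) \<bullet>c us ! l = 0"
proof -
  have uk: "\<And>k. k < length us \<Longrightarrow> us ! k \<in> carrier_vec n" using on unfolding orthonormal_def by auto
  have ok: "\<And>k. k < length us \<Longrightarrow> us ! k \<bullet>c us ! l = (if k = l then 1 else 0)"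
    using on l unfolding orthonormal_def by auto
  have "(orth_compl_proj n us *\<^sub>v w) \<bullet>c us ! l = (\<Sum>i<n. (orth_compl_proj n us *\<^sub>v w) $ i * cnj (us ! l $ i))"
    by (rule cscalar_prod_sum[OF uk[OF l]])
  also have "\<dots> = (\<Sum>i<n. (w $ i - (\<Sum>k<length us. (w \<bullet>c us ! k) * us ! k $ i)) * cnj (us ! l $ i))"
    by (rule sum.cong[OF refl]) (simp add: w on)
  also have "\<dots> = (\<Sum>i<n. w $ i * cnj (us ! l $ i)) - (\<Sum>i<n. \<Sum>k<length us. (w \<bullet>c us ! k) * us ! k $ i * cnj (us ! l $ i))"
    by (simp add: left_diff_distrib sum_subtractf sum_distrib_right)
  also have "(\<Sum>i<n. w $ i * cnj (us ! l $ i)) = w \<bullet>c us ! l" by (rule cscalar_prod_sum[OF uk[OF l], symmetric])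
  also have "(\<Sum>i<n. \<Sum>k<length us. (w \<bullet>c us ! k) * us ! k $ i * cnj (us ! l $ i))
     = (\<Sum>k<length us. \<Sum>i<n. (w \<bullet>c us ! k) * us ! k $ i * cnj (us ! l $ i))" by (rule sum.swap)
  also have "\<dots> = (\<Sum>k<length us. (w \<bullet>c us ! k) * (us ! k \<bullet>c us ! l))"
    by (rule sum.cong[OF refl]) (simp add: cscalar_prod_sum[OF uk[OF l]] sum_distrib_left mult_ac)
  also have "\<dots> = (\<Sum>k<length us. if k = l then w \<bullet>c us ! l else 0)"
    by (rule sum.cong[OF refl]) (simp add: ok)
  also have "\<dots> = w \<bullet>c us ! l" using l by simp
  finally show ?thesis by simp
qed

lemma orth_compl_proj_fix:
  assumes w: "w \<in> carrier_vec n" and on: "orthonormal n us"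
    and o: "\<And>l. l < length us \<Longrightarrow> w \<bullet>c us ! l = 0"
  shows "orth_compl_proj n us *\<^sub>v w = w"
  by (rule eq_vecI) (use w on in \<open>auto simp: o\<close>)

lemma orth_compl_proj_adj: "adj (orth_compl_proj n us) = orth_compl_proj n us"
  by (rule eq_matI) (auto simp: orth_compl_proj_def adj_def mult.commute)

lemma orth_compl_proj_trace:
  assumes on: "orthonormal n us"
  shows "(\<Sum>i<n. orth_compl_proj n us $$ (i,i)) = of_nat n - of_nat (length us)"
proof -
  have uk: "\<And>k. k < length us \<Longrightarrow> us ! k \<in> carrier_vec n" using on unfolding orthonormal_def by auto
  have ok: "\<And>k. k < length us \<Longrightarrow> us ! k \<bullet>c us ! k = 1"
    using on unfolding orthonormal_def by auto
  have "(\<Sum>i<n. orth_compl_proj n us $$ (i,i)) = (\<Sum>i<n. 1 - (\<Sum>k<length us. us ! k $ i * cnj (us ! k $ i)))"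
    by (rule sum.cong[OF refl]) (simp add: orth_compl_proj_def)
  also have "\<dots> = of_nat n - (\<Sum>i<n. \<Sum>k<length us. us ! k $ i * cnj (us ! k $ i))"
    by (simp add: sum_subtractf)
  also have "(\<Sum>i<n. \<Sum>k<length us. us ! k $ i * cnj (us ! k $ i)) = (\<Sum>k<length us. \<Sum>i<n. us ! k $ i * cnj (us ! k $ i))"
    by (rule sum.swap)
  also have "\<dots> = (\<Sum>k<length us. 1)"
    by (rule sum.cong[OF refl]) (simp add: ok cscalar_prod_sum[OF uk, symmetric])
  finally show ?thesis by simp
qed

lemma orth_compl_proj_fixed_vector:
  assumes on: "orthonormal n us" and lt: "length us < n"
  obtains w where "w \<in> carrier_vec n" "w \<noteq> 0\<^sub>v n" "orth_compl_proj n us *\<^sub>v w = w"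
proof -
  define P where "P = orth_compl_proj n us"
  have "\<exists>j<n. P *\<^sub>v unit_vec n j \<noteq> 0\<^sub>v n"
  proof (rule ccontr)
    assume none: "\<not> ?thesis"
    have "P $$ (i,i) = 0" if "i < n" for i
    proof -
      have "P $$ (i,i) = (P *\<^sub>v unit_vec n i) $ i" using that by (simp add: P_def)
      then show ?thesis using none that by simp
    qed
    then have "(of_nat n :: complex) = of_nat (length us)"
      using orth_compl_proj_trace[OF on] unfolding P_def by simp
    with lt show False by simp
  qed
  then obtain j where "j < n" and nz: "P *\<^sub>v unit_vec n j \<noteq> 0\<^sub>v n" by auto
  have w: "P *\<^sub>v unit_vec n j \<in> carrier_vec n"
    unfolding P_def by (rule mult_mat_vec_carrier[OF orth_compl_proj_carrier unit_vec_carrier])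
  have "P *\<^sub>v (P *\<^sub>v unit_vec n j) = P *\<^sub>v unit_vec n j"
    unfolding P_def by (rule orth_compl_proj_fix[OF w[unfolded P_def] on orth_compl_proj_orth[OF _ on]]) simp
  with w nz that show ?thesis unfolding P_def by blast
qed

lemma hermitian_orth_compl_invariant:
  assumes S: "S \<in> carrier_mat n n" and h: "adj S = S" and on: "orthonormal n us"
    and ev: "\<forall>k<length us. S *\<^sub>v us ! k = complex_of_real (lam k) \<cdot>\<^sub>v us ! k"
    and w: "w \<in> carrier_vec n" and orth: "\<forall>l<length us. w \<bullet>c us ! l = 0"
  shows "orth_compl_proj n us *\<^sub>v (S *\<^sub>v w) = S *\<^sub>v w"
proof (rule orth_compl_proj_fix[OF _ on])
  fix l assume l: "l < length us"
  have u: "us ! l \<in> carrier_vec n" using on l unfolding orthonormal_def by auto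
  have "(S *\<^sub>v w) \<bullet>c us ! l = w \<bullet>c (complex_of_real (lam l) \<cdot>\<^sub>v us ! l)"
    using cscalar_prod_adj[OF S w u] h ev l by simp
  then show "(S *\<^sub>v w) \<bullet>c us ! l = 0" using orth l by (simp add: cscalar_prod_smult_right[OF w u])
qed (use S w in simp)

lemma hermitian_unit_eigenvector:
  assumes S: "S \<in> carrier_mat n n" and h: "adj S = S"
    and w: "w \<in> carrier_vec n" "w \<noteq> 0\<^sub>v n" and Sw: "S *\<^sub>v w = \<mu> \<cdot>\<^sub>v w"
  obtains a m where "(a \<cdot>\<^sub>v w) \<bullet>c (a \<cdot>\<^sub>v w) = 1" and "S *\<^sub>v (a \<cdot>\<^sub>v w) = complex_of_real m \<cdot>\<^sub>v (a \<cdot>\<^sub>v w)"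
proof -
  define r where "r = (\<Sum>i<n. (cmod (w $ i))\<^sup>2)"
  have r: "r > 0" unfolding r_def by (rule sum_cmod_square_pos[OF w])
  have ww: "w \<bullet>c w = complex_of_real r" unfolding r_def by (rule cscalar_prod_self[OF w(1)])
  have "Im (\<mu> * complex_of_real r) = 0"
    using hermitian_form_real[OF S h w(1)] cscalar_prod_smult_left[OF w(1) w(1), of \<mu>] Sw ww by simp
  then have \<mu>_real: "\<mu> = complex_of_real (Re \<mu>)" using r by (simp add: complex_eq_iff)
  define m where "m = Re \<mu>"
  have Sw_real: "S *\<^sub>v w = complex_of_real m \<cdot>\<^sub>v w" using Sw unfolding m_def by (subst (asm) \<mu>_real)
  define a where "a = complex_of_real (1 / sqrt r)"
  have "(a \<cdot>\<^sub>v w) \<bullet>c (a \<cdot>\<^sub>v w) = a * (cnj a * (w \<bullet>c w))"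
    using w(1) by (simp add: cscalar_prod_smult_left[of _ n] cscalar_prod_smult_right[of _ n])
  also have "\<dots> = complex_of_real ((1 / sqrt r) * (1 / sqrt r) * r)"
    unfolding ww a_def by (simp only: complex_cnj_complex_of_real of_real_mult mult.assoc)
  also have "(1 / sqrt r) * (1 / sqrt r) * r = 1" using r by (simp add: field_simps)
  finally have "(a \<cdot>\<^sub>v w) \<bullet>c (a \<cdot>\<^sub>v w) = 1" by simp
  moreover have "S *\<^sub>v (a \<cdot>\<^sub>v w) = complex_of_real m \<cdot>\<^sub>v (a \<cdot>\<^sub>v w)"
    using mult_mat_vec[OF S w(1)] Sw_real by (simp add: smult_smult_assoc mult.commute)
  ultimately show ?thesis using that by blast
qed

lemma hermitian_eigenvector_orth_compl:
  assumes S: "S \<in> carrier_mat n n" and h: "adj S = S" and on: "orthonormal n us"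
    and ev: "\<forall>k<length us. S *\<^sub>v us ! k = complex_of_real (lam k) \<cdot>\<^sub>v us ! k"
    and lt: "length us < n"
  obtains u \<mu> where "u \<in> carrier_vec n" "u \<bullet>c u = 1" "\<forall>l<length us. u \<bullet>c us ! l = 0"
    "S *\<^sub>v u = complex_of_real \<mu> \<cdot>\<^sub>v u"
proof -
  define P where "P = orth_compl_proj n us"
  define C where "C = P * S * P"
  have P: "P \<in> carrier_mat n n" and C: "C \<in> carrier_mat n n" unfolding C_def P_def using S by auto
  have C_apply: "C *\<^sub>v v = P *\<^sub>v (S *\<^sub>v (P *\<^sub>v v))" if "v \<in> carrier_vec n" for v
  proof -
    have "C *\<^sub>v v = (P * S) *\<^sub>v (P *\<^sub>v v)" unfolding C_def by (rule assoc_mult_mat_vec) (use P S that in auto)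
    then show ?thesis using P S that by simp
  qed
  have orth_P: "\<forall>l<length us. (P *\<^sub>v v) \<bullet>c us ! l = 0" if "v \<in> carrier_vec n" for v
    unfolding P_def using orth_compl_proj_orth[OF that on] by simp
  \<comment> \<open>An eigenvector of the compression \<open>C\<close> that \<open>P\<close> fixes is an eigenvector of \<open>S\<close>; if \<open>C = 0\<close> any
      vector fixed by \<open>P\<close> will do, otherwise take an eigenvector for a nonzero eigenvalue.\<close>
  obtain w \<mu> where w: "w \<in> carrier_vec n" "w \<noteq> 0\<^sub>v n" and Pw: "P *\<^sub>v w = w" and Cw: "C *\<^sub>v w = \<mu> \<cdot>\<^sub>v w"
  proof (cases "C = 0\<^sub>m n n")
    case True
    obtain w where "w \<in> carrier_vec n" "w \<noteq> 0\<^sub>v n" "P *\<^sub>v w = w"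
      using orth_compl_proj_fixed_vector[OF on lt] unfolding P_def by metis
    moreover have "C *\<^sub>v w = 0 \<cdot>\<^sub>v w" using True \<open>w \<in> carrier_vec n\<close> by (auto intro!: eq_vecI)
    ultimately show ?thesis using that by blast
  next
    case False
    have hC: "adj C = C"
      unfolding C_def P_def using adj_mult[of _ n n _ n] S h orth_compl_proj_adj
      by (simp add: assoc_mult_mat[of _ n n _ n _ n])
    obtain \<mu> w where \<mu>: "\<mu> \<noteq> 0" and w: "w \<in> carrier_vec n" "w \<noteq> 0\<^sub>v n" and Cw: "C *\<^sub>v w = \<mu> \<cdot>\<^sub>v w"
      using hermitian_nonzero_eigenvalue[OF C hC False] by blast
    have "(1 / \<mu>) \<cdot>\<^sub>v (C *\<^sub>v w) = w" using \<mu> by (simp add: Cw smult_smult_assoc)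
    then have w_eq: "w = (1 / \<mu>) \<cdot>\<^sub>v (P *\<^sub>v (S *\<^sub>v (P *\<^sub>v w)))" by (simp add: C_apply[OF w(1)])
    have "w \<bullet>c us ! l = 0" if l: "l < length us" for l
    proof -
      have "us ! l \<in> carrier_vec n" using on l unfolding orthonormal_def by auto
      then have "w \<bullet>c us ! l = (1 / \<mu>) * ((P *\<^sub>v (S *\<^sub>v (P *\<^sub>v w))) \<bullet>c us ! l)"
        by (subst w_eq) (rule cscalar_prod_smult_left[of _ n], use P S w in simp)
      then show ?thesis using orth_P[of "S *\<^sub>v (P *\<^sub>v w)"] P S w l by simp
    qed
    then have "P *\<^sub>v w = w" unfolding P_def using orth_compl_proj_fix[OF w(1) on] by blast
    then show ?thesis using that w Cw by blast
  qed
  have orth: "\<forall>l<length us. w \<bullet>c us ! l = 0" using orth_P[OF w(1)] Pw by simp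
  have "S *\<^sub>v w = P *\<^sub>v (S *\<^sub>v w)"
    unfolding P_def by (rule hermitian_orth_compl_invariant[OF S h on ev w(1) orth, symmetric])
  also have "\<dots> = \<mu> \<cdot>\<^sub>v w" using C_apply[OF w(1)] Cw Pw by simp
  finally have Sw: "S *\<^sub>v w = \<mu> \<cdot>\<^sub>v w" .
  obtain a m where "(a \<cdot>\<^sub>v w) \<bullet>c (a \<cdot>\<^sub>v w) = 1" "S *\<^sub>v (a \<cdot>\<^sub>v w) = complex_of_real m \<cdot>\<^sub>v (a \<cdot>\<^sub>v w)"
    using hermitian_unit_eigenvector[OF S h w Sw] by blast
  moreover have "\<forall>l<length us. (a \<cdot>\<^sub>v w) \<bullet>c us ! l = 0"
    using orth on w(1) by (simp add: cscalar_prod_smult_left[of _ n] orthonormal_def)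
  moreover have "a \<cdot>\<^sub>v w \<in> carrier_vec n" using w by simp
  ultimately show ?thesis using that by blast
qed

lemma orthonormal_snoc:
  assumes on: "orthonormal n us" and u: "u \<in> carrier_vec n" and uu: "u \<bullet>c u = 1"
    and orth: "\<forall>l<length us. u \<bullet>c us ! l = 0"
  shows "orthonormal n (us @ [u])"
  unfolding orthonormal_def
proof (intro conjI allI impI ballI)
  fix v assume "v \<in> set (us @ [u])" then show "v \<in> carrier_vec n" using on u unfolding orthonormal_def by auto
next
  fix k l assume k: "k < length (us @ [u])" and l: "l < length (us @ [u])"
  have uk: "us ! k \<in> carrier_vec n" if "k < length us" for k using on that unfolding orthonormal_def by auto
  have swap: "us ! k \<bullet>c u = 0" if "k < length us" for k
    using cscalar_prod_swap[OF u uk[OF that]] orth that by simp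
  show "(us @ [u]) ! k \<bullet>c (us @ [u]) ! l = (if k = l then 1 else 0)"
    using k l on uu orth swap unfolding orthonormal_def by (auto simp: nth_append)
qed

lemma hermitian_orthonormal_eigenvectors:
  assumes S: "S \<in> carrier_mat n n" and h: "adj S = S"
  shows "m \<le> n \<Longrightarrow> \<exists>us lam. length us = m \<and> orthonormal n us \<and>
     (\<forall>k<m. S *\<^sub>v us ! k = complex_of_real (lam k) \<cdot>\<^sub>v us ! k)"
proof (induction m)
  case 0
  show ?case by (rule exI[of _ "[]"]) (auto simp: orthonormal_def)
next
  case (Suc m)
  then obtain us lam where len: "length us = m" and on: "orthonormal n us"
    and ev: "\<forall>k<m. S *\<^sub>v us ! k = complex_of_real (lam k) \<cdot>\<^sub>v us ! k" by auto
  obtain u \<mu> where u: "u \<in> carrier_vec n" "u \<bullet>c u = 1" "\<forall>l<length us. u \<bullet>c us ! l = 0"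
    and Su: "S *\<^sub>v u = complex_of_real \<mu> \<cdot>\<^sub>v u"
    using hermitian_eigenvector_orth_compl[OF S h on, of lam] ev len Suc.prems by auto
  have "\<forall>k<Suc m. S *\<^sub>v (us @ [u]) ! k = complex_of_real ((lam(m := \<mu>)) k) \<cdot>\<^sub>v (us @ [u]) ! k"
    using ev Su len by (auto simp: nth_append less_Suc_eq)
  then show ?case using orthonormal_snoc[OF on u] len by (intro exI) auto
qed

lemma hermitian_unitary_eigenbasis:
  assumes S: "S \<in> carrier_mat n n" and h: "adj S = S"
  shows "\<exists>U lam. U \<in> carrier_mat n n \<and> adj U * U = 1\<^sub>m n \<and> U * adj U = 1\<^sub>m n \<and>
     (\<forall>k<n. col U k \<in> carrier_vec n \<and> S *\<^sub>v col U k = complex_of_real (lam k) \<cdot>\<^sub>v col U k) \<and>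
     (\<forall>k<n. \<forall>l<n. col U k \<bullet>c col U l = (if k = l then 1 else 0))"
proof -
  obtain us lam where len: "length us = n" and on: "orthonormal n us"
    and ev: "\<forall>k<n. S *\<^sub>v us ! k = complex_of_real (lam k) \<cdot>\<^sub>v us ! k"
    using hermitian_orthonormal_eigenvectors[OF S h, of n] by auto
  have uk: "\<And>k. k < length us \<Longrightarrow> us ! k \<in> carrier_vec n" using on unfolding orthonormal_def by auto
  define U where "U = mat_of_cols n us"
  have U: "U \<in> carrier_mat n n" unfolding U_def using len mat_of_cols_carrier(1)[of n us] by simp
  have col: "\<And>k. k < n \<Longrightarrow> col U k = us ! k" unfolding U_def using len uk by simp
  have UU: "adj U * U = 1\<^sub>m n"
  proof (rule eq_matI)
    fix k l assume "k < dim_row (1\<^sub>m n)" "l < dim_col (1\<^sub>m n)"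
    hence k: "k < n" and l: "l < n" by auto
    have "(adj U * U) $$ (k,l) = (\<Sum>i<n. adj U $$ (k,i) * U $$ (i,l))"
      by (rule index_mult_mat_sum[OF adj_carrier_mat[OF U] U k l])
    also have "\<dots> = (\<Sum>i<n. us ! l $ i * cnj (us ! k $ i))"
      using U k l len by (auto simp: U_def mat_of_cols_index mult.commute intro!: sum.cong)
    also have "\<dots> = us ! l \<bullet>c us ! k" by (rule cscalar_prod_sum[symmetric]) (use uk k len in auto)
    also have "\<dots> = 1\<^sub>m n $$ (k,l)" using on k l len unfolding orthonormal_def by auto
    finally show "(adj U * U) $$ (k,l) = 1\<^sub>m n $$ (k,l)" .
  qed (use U in auto)
  have UU2: "U * adj U = 1\<^sub>m n" by (rule mat_mult_left_right_inverse[OF adj_carrier_mat[OF U] U UU])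
  show ?thesis using U UU UU2 col ev uk len on unfolding orthonormal_def by (intro exI[of _ U] exI[of _ lam]) auto
qed

section \<open>Inverse square roots of positive definite matrices\<close>

lemma mat_eq_on_unitary_cols:
  assumes X: "X \<in> carrier_mat n n" and Y: "Y \<in> carrier_mat n n"
    and U: "U \<in> carrier_mat n n" and UU: "U * adj U = 1\<^sub>m n"
    and e: "\<And>k. k < n \<Longrightarrow> X *\<^sub>v col U k = Y *\<^sub>v col U k"
  shows "X = Y"
proof -
  have XU: "X * U = Y * U"
  proof (rule eq_matI)
    fix i k assume "i < dim_row (Y * U)" "k < dim_col (Y * U)"
    hence i: "i < n" and k: "k < n" using Y U by auto
    have "(X * U) $$ (i,k) = col (X * U) k $ i" using X U i k by simp
    also have "\<dots> = (X *\<^sub>v col U k) $ i" using col_mult2[OF X U k] by simp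
    also have "\<dots> = (Y *\<^sub>v col U k) $ i" using e[OF k] by simp
    also have "\<dots> = col (Y * U) k $ i" using col_mult2[OF Y U k] by simp
    also have "\<dots> = (Y * U) $$ (i,k)" using Y U i k by simp
    finally show "(X * U) $$ (i,k) = (Y * U) $$ (i,k)" .
  qed (use X Y U in auto)
  have "X = X * (U * adj U)" using X UU by simp
  also have "\<dots> = (X * U) * adj U" using X U by (simp add: assoc_mult_mat[of _ n n _ n _ n])
  also have "\<dots> = (Y * U) * adj U" using XU by simp
  also have "\<dots> = Y * (U * adj U)" using Y U by (simp add: assoc_mult_mat[of _ n n _ n _ n])
  also have "\<dots> = Y" using Y UU by simp
  finally show ?thesis .
qed

lemma pos_def_eigenvalue_pos:
  assumes pd: "pos_def_mat n S" and u: "u \<in> carrier_vec n" and uu: "u \<bullet>c u = 1"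
    and Su: "S *\<^sub>v u = complex_of_real l \<cdot>\<^sub>v u"
  shows "l > 0"
proof -
  have "u \<noteq> 0\<^sub>v n"
  proof
    assume "u = 0\<^sub>v n"
    hence "u \<bullet>c u = 0" by (simp add: cscalar_prod_sum[of _ n])
    with uu show False by simp
  qed
  hence "Re ((S *\<^sub>v u) \<bullet>c u) > 0" using pd u unfolding pos_def_mat_def by auto
  moreover have "(S *\<^sub>v u) \<bullet>c u = complex_of_real l" unfolding Su using cscalar_prod_smult_left[OF u u] uu by simp
  ultimately show ?thesis by simp
qed

lemma assoc_mult_mat3_vec:
  "A \<in> carrier_mat n n \<Longrightarrow> B \<in> carrier_mat n n \<Longrightarrow> C \<in> carrier_mat n n \<Longrightarrow> v \<in> carrier_vec n \<Longrightarrow>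
   (A * B * C) *\<^sub>v v = A *\<^sub>v (B *\<^sub>v (C *\<^sub>v v))"
  by (subst assoc_mult_mat_vec[of "A * B" n n C n]) auto

lemma pos_def_inv_sqrt_on_eigenvector:
  assumes R: "pos_def_mat n R" and RRS: "R * R * S = 1\<^sub>m n" and S: "S \<in> carrier_mat n n"
    and u: "u \<in> carrier_vec n" and l: "0 < l" and Su: "S *\<^sub>v u = complex_of_real l \<cdot>\<^sub>v u"
  shows "R *\<^sub>v u = complex_of_real (1 / sqrt l) \<cdot>\<^sub>v u"
proof -
  \<comment> \<open>\<open>R\<^sup>2 u = r\<^sup>2 u\<close> for \<open>r = 1/\<surd>l\<close>, so \<open>w = R u - r u\<close> satisfies \<open>R w = -r w\<close>, which positivity of \<open>R\<close> forbids
      unless \<open>w = 0\<close>.\<close>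
  define r where "r = 1 / sqrt l"
  have rl: "r * r * l = 1" and rpos: "0 < r" using l unfolding r_def by (auto simp: field_simps)
  have Rc: "R \<in> carrier_mat n n" using R unfolding pos_def_mat_def by auto
  define a where "a = R *\<^sub>v u"
  have a: "a \<in> carrier_vec n" unfolding a_def using Rc u by simp
  have "u = (R * R * S) *\<^sub>v u" using RRS u by simp
  also have "\<dots> = complex_of_real l \<cdot>\<^sub>v (R *\<^sub>v a)"
    unfolding assoc_mult_mat3_vec[OF Rc Rc S u] Su a_def using Rc u by (simp add: mult_mat_vec[OF Rc])
  finally have "complex_of_real (r * r) \<cdot>\<^sub>v u = complex_of_real (r * r * l) \<cdot>\<^sub>v (R *\<^sub>v a)"
    by (simp add: smult_smult_assoc)
  then have Ra: "R *\<^sub>v a = complex_of_real (r * r) \<cdot>\<^sub>v u" using rl by simp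
  define w where "w = a - complex_of_real r \<cdot>\<^sub>v u"
  have w: "w \<in> carrier_vec n" unfolding w_def using a u by simp
  have "R *\<^sub>v w = R *\<^sub>v a - R *\<^sub>v (complex_of_real r \<cdot>\<^sub>v u)"
    unfolding w_def by (rule mult_minus_distrib_mat_vec[OF Rc a]) (use u in simp)
  also have "\<dots> = complex_of_real (r * r) \<cdot>\<^sub>v u - complex_of_real r \<cdot>\<^sub>v a"
    unfolding Ra using mult_mat_vec[OF Rc u] a_def by simp
  also have "\<dots> = (- complex_of_real r) \<cdot>\<^sub>v w"
    unfolding w_def using a u by (intro eq_vecI) (auto simp: algebra_simps)
  finally have Rw: "R *\<^sub>v w = (- complex_of_real r) \<cdot>\<^sub>v w" .
  have "w = 0\<^sub>v n"
  proof (rule ccontr)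
    assume nz: "w \<noteq> 0\<^sub>v n"
    then have "0 < Re ((R *\<^sub>v w) \<bullet>c w)" using R w unfolding pos_def_mat_def by auto
    also have "(R *\<^sub>v w) \<bullet>c w = complex_of_real (- (r * (\<Sum>i<n. (cmod (w $ i))\<^sup>2)))"
      unfolding Rw cscalar_prod_smult_left[OF w w] cscalar_prod_self[OF w] by simp
    finally show False using mult_pos_pos[OF rpos sum_cmod_square_pos[OF w nz]] by simp
  qed
  then have "a = complex_of_real r \<cdot>\<^sub>v u"
  proof (intro eq_vecI)
    fix i assume "i < dim_vec (complex_of_real r \<cdot>\<^sub>v u)"
    then have i: "i < n" using u by simp
    assume "w = 0\<^sub>v n"
    then have "(a - complex_of_real r \<cdot>\<^sub>v u) $ i = 0" unfolding w_def using i by simp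
    then show "a $ i = (complex_of_real r \<cdot>\<^sub>v u) $ i" using a u i by simp
  qed (use a u in simp)
  then show ?thesis unfolding a_def r_def .
qed

definition real_diag :: "nat \<Rightarrow> (nat \<Rightarrow> real) \<Rightarrow> complex mat" where
  "real_diag n r = mat n n (\<lambda>(i,j). if i = j then complex_of_real (r i) else 0)"

lemma real_diag_carrier [simp]: "real_diag n r \<in> carrier_mat n n"
  unfolding real_diag_def by simp

lemma real_diag_adj [simp]: "adj (real_diag n r) = real_diag n r"
  unfolding real_diag_def by (intro eq_matI) auto

lemma unitary_conj_real_diag_col:
  assumes U: "U \<in> carrier_mat n n" and UU: "adj U * U = 1\<^sub>m n" and k: "k < n"
  shows "(U * real_diag n r * adj U) *\<^sub>v col U k = complex_of_real (r k) \<cdot>\<^sub>v col U k"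
proof -
  have "adj U *\<^sub>v col U k = unit_vec n k"
    using col_mult2[OF adj_carrier_mat[OF U] U k] UU k by simp
  moreover have "real_diag n r *\<^sub>v unit_vec n k = complex_of_real (r k) \<cdot>\<^sub>v unit_vec n k"
    using k by (intro eq_vecI) (auto simp: real_diag_def)
  moreover have "U *\<^sub>v unit_vec n k = col U k"
    using U k by (intro eq_vecI) auto
  ultimately show ?thesis using U k
    by (simp add: assoc_mult_mat3_vec[OF U real_diag_carrier adj_carrier_mat[OF U]] mult_mat_vec[OF U])
qed

lemma unitary_conj_real_diag_pos_def:
  assumes U: "U \<in> carrier_mat n n" and UU: "U * adj U = 1\<^sub>m n" and r: "\<And>k. k < n \<Longrightarrow> 0 < r k"
  shows "pos_def_mat n (U * real_diag n r * adj U)"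
  unfolding pos_def_mat_def
proof (intro conjI ballI impI)
  define D where "D = real_diag n r"
  have D: "D \<in> carrier_mat n n" unfolding D_def by simp
  show "adj (U * real_diag n r * adj U) = U * real_diag n r * adj U"
    using adj_mult[OF U D] adj_mult[OF mult_carrier_mat[OF U D] adj_carrier_mat[OF U]]
      assoc_mult_mat[OF U D adj_carrier_mat[OF U]]
    by (simp add: D_def)
  fix v :: "complex vec" assume v: "v \<in> carrier_vec n" and nz: "v \<noteq> 0\<^sub>v n"
  define x where "x = adj U *\<^sub>v v"
  have x: "x \<in> carrier_vec n" unfolding x_def using U v by simp
  have "x \<noteq> 0\<^sub>v n"
  proof
    assume "x = 0\<^sub>v n"
    have "v = (U * adj U) *\<^sub>v v" using UU v by simp
    also have "\<dots> = U *\<^sub>v x" unfolding x_def by (rule assoc_mult_mat_vec[OF U adj_carrier_mat[OF U] v])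
    also have "\<dots> = 0\<^sub>v n" using \<open>x = 0\<^sub>v n\<close> U by (intro eq_vecI) auto
    finally show False using nz by simp
  qed
  have "(U * D * adj U *\<^sub>v v) \<bullet>c v = (D *\<^sub>v x) \<bullet>c x"
    unfolding assoc_mult_mat3_vec[OF U D adj_carrier_mat[OF U] v] x_def[symmetric]
    using cscalar_prod_adj[OF U _ v, of "D *\<^sub>v x"] D x by (simp add: x_def)
  also have "\<dots> = (\<Sum>i<n. complex_of_real (r i * (cmod (x $ i))\<^sup>2))"
  proof (rule trans[OF cscalar_prod_sum[OF x] sum.cong[OF refl]])
    fix i assume i: "i \<in> {..<n}"
    have "(D *\<^sub>v x) $ i = (\<Sum>l<n. D $$ (i,l) * x $ l)" using D x i by (simp add: index_mult_mat_vec_sum)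
    also have "\<dots> = (\<Sum>l<n. (if i = l then complex_of_real (r i) else 0) * x $ l)"
      using i by (auto simp: D_def real_diag_def intro!: sum.cong)
    also have "\<dots> = complex_of_real (r i) * x $ i"
      using i by (simp add: if_distrib[of "\<lambda>y. y * _"] cong: if_cong)
    finally have "(D *\<^sub>v x) $ i = complex_of_real (r i) * x $ i" .
    then show "(D *\<^sub>v x) $ i * cnj (x $ i) = complex_of_real (r i * (cmod (x $ i))\<^sup>2)"
      by (simp only: of_real_mult complex_norm_square mult.assoc)
  qed
  also have "\<dots> = complex_of_real (\<Sum>i<n. r i * (cmod (x $ i))\<^sup>2)" by (simp only: of_real_sum)
  finally have eq: "Re ((U * D * adj U *\<^sub>v v) \<bullet>c v) = (\<Sum>i<n. r i * (cmod (x $ i))\<^sup>2)" by simp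
  obtain i where i: "i < n" "x $ i \<noteq> 0"
    using \<open>x \<noteq> 0\<^sub>v n\<close> x by (metis carrier_vecD eq_vecI index_zero_vec(1) index_zero_vec(2))
  have "0 < r i * (cmod (x $ i))\<^sup>2" using i r by simp
  also have "\<dots> \<le> (\<Sum>i<n. r i * (cmod (x $ i))\<^sup>2)"
    by (rule member_le_sum) (use i in \<open>auto intro!: mult_nonneg_nonneg less_imp_le[OF r]\<close>)
  finally show "0 < Re ((U * real_diag n r * adj U *\<^sub>v v) \<bullet>c v)" using eq by (simp add: D_def)
qed (rule mult_carrier_mat[OF mult_carrier_mat[OF U real_diag_carrier] adj_carrier_mat[OF U]])

lemma pos_def_inv_sqrt_ex1:
  assumes pd: "pos_def_mat n S"
  shows "\<exists>!R. pos_def_mat n R \<and> R * R * S = 1\<^sub>m n"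
proof -
  have S: "S \<in> carrier_mat n n" and h: "adj S = S" using pd unfolding pos_def_mat_def by auto
  obtain U lam where U: "U \<in> carrier_mat n n" and UU1: "adj U * U = 1\<^sub>m n" and UU2: "U * adj U = 1\<^sub>m n"
    and ev: "\<And>k. k < n \<Longrightarrow> col U k \<in> carrier_vec n \<and> S *\<^sub>v col U k = complex_of_real (lam k) \<cdot>\<^sub>v col U k"
    and on: "\<And>k l. k < n \<Longrightarrow> l < n \<Longrightarrow> col U k \<bullet>c col U l = (if k = l then 1 else 0)"
    using hermitian_unitary_eigenbasis[OF S h] by blast
  have lam: "0 < lam k" if "k < n" for k
    using pos_def_eigenvalue_pos[OF pd _ _ ev[THEN conjunct2]] ev on that by simp
  define r where "r k = 1 / sqrt (lam k)" for k
  have rl: "lam k * r k * r k = 1" if "k < n" for k using lam[OF that] unfolding r_def by simp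
  define R0 where "R0 = U * real_diag n r * adj U"
  have R0: "pos_def_mat n R0"
    unfolding R0_def by (rule unitary_conj_real_diag_pos_def[OF U UU2]) (simp add: lam r_def)
  have R0c: "R0 \<in> carrier_mat n n"
    unfolding R0_def by (rule mult_carrier_mat[OF mult_carrier_mat[OF U real_diag_carrier] adj_carrier_mat[OF U]])
  have R0col: "R0 *\<^sub>v col U k = complex_of_real (r k) \<cdot>\<^sub>v col U k" if "k < n" for k
    unfolding R0_def by (rule unitary_conj_real_diag_col[OF U UU1 that])
  have "R0 * R0 * S = 1\<^sub>m n"
  proof (rule mat_eq_on_unitary_cols[OF _ _ U UU2])
    fix k assume k: "k < n"
    have "(R0 * R0 * S) *\<^sub>v col U k = complex_of_real (lam k * r k * r k) \<cdot>\<^sub>v col U k"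
      unfolding assoc_mult_mat3_vec[OF R0c R0c S ev[OF k, THEN conjunct1]] using ev[OF k] R0col[OF k]
      by (simp add: smult_smult_assoc mult_mat_vec[OF R0c] mult_ac)
    also have "\<dots> = 1\<^sub>m n *\<^sub>v col U k" using rl[OF k] ev[OF k] by simp
    finally show "(R0 * R0 * S) *\<^sub>v col U k = 1\<^sub>m n *\<^sub>v col U k" .
  qed (use R0c S in auto)
  moreover have "R = R0" if "pos_def_mat n R" "R * R * S = 1\<^sub>m n" for R
  proof (rule mat_eq_on_unitary_cols[OF _ R0c U UU2])
    show "R \<in> carrier_mat n n" using that unfolding pos_def_mat_def by auto
    fix k assume k: "k < n"
    show "R *\<^sub>v col U k = R0 *\<^sub>v col U k"
      using pos_def_inv_sqrt_on_eigenvector[OF that S _ lam[OF k], of "col U k"] ev[OF k] R0col[OF k]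
      by (simp add: r_def)
  qed
  ultimately show ?thesis using R0 by blast
qed

lemma inv_sqrt_mat:
  assumes "pos_def_mat n S"
  shows inv_sqrt_mat_pos_def: "pos_def_mat n (inv_sqrt_mat n S)"
    and inv_sqrt_mat_square: "inv_sqrt_mat n S * inv_sqrt_mat n S * S = 1\<^sub>m n"
  using theI'[OF pos_def_inv_sqrt_ex1[OF assms]] unfolding inv_sqrt_mat_def by auto

lemma mat_inv_eqI:
  assumes A: "A \<in> carrier_mat n n" and B: "B \<in> carrier_mat n n" and BA: "B * A = 1\<^sub>m n"
  shows "mat_inv n A = B"
  unfolding mat_inv_def
proof (rule the_equality)
  fix C assume "C \<in> carrier_mat n n \<and> C * A = 1\<^sub>m n"
  then have C: "C \<in> carrier_mat n n" and CA: "C * A = 1\<^sub>m n" by auto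
  have "C = C * (A * B)" using C mat_mult_left_right_inverse[OF B A BA] by simp
  also have "\<dots> = (C * A) * B" using A B C by (simp add: assoc_mult_mat[of _ n n _ n _ n])
  finally show "C = B" using B CA by simp
qed (use B BA in simp)

section \<open>Frames and the canonical dual\<close>

locale scalar_field =
  fixes K :: "complex set"
  assumes real_or_complex: "K = \<real> \<or> K = UNIV"
begin

lemma zero_in_K [simp, intro]: "0 \<in> K" and one_in_K [simp, intro]: "1 \<in> K"
  using real_or_complex by auto

lemma mult_in_K [intro]: "a \<in> K \<Longrightarrow> b \<in> K \<Longrightarrow> a * b \<in> K"
  using real_or_complex by auto

lemma diff_in_K [intro]: "a \<in> K \<Longrightarrow> b \<in> K \<Longrightarrow> a - b \<in> K"
  using real_or_complex by auto

lemma uminus_in_K [intro]: "a \<in> K \<Longrightarrow> - a \<in> K"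
  using real_or_complex by auto

lemma cnj_in_K [intro]: "a \<in> K \<Longrightarrow> cnj a \<in> K"
  using real_or_complex by (auto simp: Reals_cnj_iff)

lemma sum_in_K [intro]: "(\<And>i. i \<in> A \<Longrightarrow> f i \<in> K) \<Longrightarrow> sum f A \<in> K"
  using real_or_complex by auto

lemma unit_vec_inH: "k < n \<Longrightarrow> inH K n (unit_vec n k)"
  unfolding inH_def by auto

lemma cscalar_prod_in_K: "inH K n v \<Longrightarrow> inH K n w \<Longrightarrow> v \<bullet>c w \<in> K"
  unfolding inH_def by (auto simp: cscalar_prod_sum intro!: sum_in_K mult_in_K cnj_in_K)

end

lemma lincomb_seq_carrier [simp]: "lincomb_seq n c f A \<in> carrier_vec n"
  and lincomb_seq_dim [simp]: "dim_vec (lincomb_seq n c f A) = n"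
  and lincomb_seq_index [simp]: "k < n \<Longrightarrow> lincomb_seq n c f A $ k = (\<Sum>i\<in>A. c i * f i $ k)"
  unfolding lincomb_seq_def by auto

lemma cscalar_prod_lincomb_left:
  assumes w: "w \<in> carrier_vec n"
  shows "lincomb_seq n c f A \<bullet>c w = (\<Sum>i\<in>A. c i * (f i \<bullet>c w))"
proof -
  have "lincomb_seq n c f A \<bullet>c w = (\<Sum>k<n. \<Sum>i\<in>A. c i * f i $ k * cnj (w $ k))"
    by (simp add: cscalar_prod_sum[OF w] sum_distrib_right)
  also have "\<dots> = (\<Sum>i\<in>A. \<Sum>k<n. c i * f i $ k * cnj (w $ k))" by (rule sum.swap)
  also have "\<dots> = (\<Sum>i\<in>A. c i * (f i \<bullet>c w))" by (simp add: cscalar_prod_sum[OF w] sum_distrib_left mult_ac)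
  finally show ?thesis .
qed

lemma cscalar_prod_lincomb_right:
  assumes v: "v \<in> carrier_vec n" and f: "\<And>i. i \<in> A \<Longrightarrow> f i \<in> carrier_vec n"
  shows "v \<bullet>c lincomb_seq n c f A = (\<Sum>i\<in>A. cnj (c i) * (v \<bullet>c f i))"
proof -
  have "v \<bullet>c lincomb_seq n c f A = cnj (\<Sum>i\<in>A. c i * (f i \<bullet>c v))"
    by (simp add: cscalar_prod_swap[OF _ v] cscalar_prod_lincomb_left[OF v])
  also have "\<dots> = (\<Sum>i\<in>A. cnj (c i) * (v \<bullet>c f i))"
    by (auto simp: cscalar_prod_swap[OF v f] intro!: sum.cong)
  finally show ?thesis .
qed

lemma mult_mat_vec_lincomb:
  assumes M: "M \<in> carrier_mat n n" and f: "\<And>i. i \<in> A \<Longrightarrow> f i \<in> carrier_vec n"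
  shows "M *\<^sub>v lincomb_seq n c f A = lincomb_seq n c (\<lambda>i. M *\<^sub>v f i) A"
proof (rule eq_vecI)
  fix k assume "k < dim_vec (lincomb_seq n c (\<lambda>i. M *\<^sub>v f i) A)"
  hence k: "k < n" by simp
  have "(M *\<^sub>v lincomb_seq n c f A) $ k = (\<Sum>l<n. \<Sum>i\<in>A. M $$ (k,l) * (c i * f i $ l))"
    using M k by (simp add: sum_distrib_left)
  also have "\<dots> = (\<Sum>i\<in>A. \<Sum>l<n. M $$ (k,l) * (c i * f i $ l))" by (rule sum.swap)
  also have "\<dots> = lincomb_seq n c (\<lambda>i. M *\<^sub>v f i) A $ k"
    using M k f by (auto simp: sum_distrib_left mult_ac intro!: sum.cong)
  finally show "(M *\<^sub>v lincomb_seq n c f A) $ k = lincomb_seq n c (\<lambda>i. M *\<^sub>v f i) A $ k" .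
qed (use M in simp)

lemma lincomb_seq_diff:
  "lincomb_seq n (\<lambda>i. c i - d i) f A = lincomb_seq n c f A - lincomb_seq n d f A"
  by (intro eq_vecI) (auto simp: left_diff_distrib sum_subtractf)

lemma lincomb_seq_delta:
  assumes "finite A" and "f j \<in> carrier_vec n"
  shows "lincomb_seq n (\<lambda>i. if i = j then 1 else 0) f A = (if j \<in> A then f j else 0\<^sub>v n)"
  using assms by (intro eq_vecI) (auto simp: if_distrib[of "\<lambda>x. x * _"] cong: if_cong)

lemma frame_op_dim [simp]: "dim_row (frame_op n N f) = n" "dim_col (frame_op n N f) = n"
  unfolding frame_op_def synthesis_op_def analysis_op_def by simp_all

lemma frame_op_carrier [simp]: "frame_op n N f \<in> carrier_mat n n"
  unfolding carrier_mat_def by simp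

lemma frame_op_index: "k < n \<Longrightarrow> l < n \<Longrightarrow> frame_op n N f $$ (k,l) = (\<Sum>i<N. f i $ k * cnj (f i $ l))"
  unfolding frame_op_def synthesis_op_def analysis_op_def
  by (simp add: scalar_prod_def atLeast0LessThan)

lemma frame_op_hermitian: "adj (frame_op n N f) = frame_op n N f"
  by (rule eq_matI) (auto simp: frame_op_index mult.commute)

lemma frame_op_apply:
  assumes v: "v \<in> carrier_vec n" and f: "\<And>i. i < N \<Longrightarrow> f i \<in> carrier_vec n"
  shows "frame_op n N f *\<^sub>v v = lincomb_seq n (\<lambda>i. v \<bullet>c f i) f {..<N}"
proof (rule eq_vecI)
  fix k assume "k < dim_vec (lincomb_seq n (\<lambda>i. v \<bullet>c f i) f {..<N})"
  hence k: "k < n" by simp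
  have "(frame_op n N f *\<^sub>v v) $ k = (\<Sum>l<n. \<Sum>i<N. f i $ k * cnj (f i $ l) * v $ l)"
    using v k by (simp add: index_mult_mat_vec_sum[OF frame_op_carrier v k] frame_op_index sum_distrib_right)
  also have "\<dots> = (\<Sum>i<N. \<Sum>l<n. f i $ k * cnj (f i $ l) * v $ l)" by (rule sum.swap)
  also have "\<dots> = (\<Sum>i<N. (v \<bullet>c f i) * f i $ k)"
    using f by (auto simp: cscalar_prod_sum[of _ n] sum_distrib_left mult_ac intro!: sum.cong)
  finally show "(frame_op n N f *\<^sub>v v) $ k = lincomb_seq n (\<lambda>i. v \<bullet>c f i) f {..<N} $ k"
    using k by simp
qed simp

lemma frame_op_form:
  assumes v: "v \<in> carrier_vec n" and f: "\<And>i. i < N \<Longrightarrow> f i \<in> carrier_vec n"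
  shows "(frame_op n N f *\<^sub>v v) \<bullet>c v = of_real (\<Sum>i<N. (cmod (v \<bullet>c f i))\<^sup>2)"
proof -
  have "(frame_op n N f *\<^sub>v v) \<bullet>c v = (\<Sum>i<N. (v \<bullet>c f i) * cnj (v \<bullet>c f i))"
    by (simp add: frame_op_apply[OF v f] cscalar_prod_lincomb_left[OF v] cscalar_prod_swap[OF v f])
  also have "\<dots> = of_real (\<Sum>i<N. (cmod (v \<bullet>c f i))\<^sup>2)"
    by (simp only: complex_norm_square of_real_sum)
  finally show ?thesis .
qed

locale frame = scalar_field +
  fixes n N :: nat and f :: "nat \<Rightarrow> complex vec"
  assumes is_frame: "is_frame K n N f"
begin

abbreviation "S \<equiv> frame_op n N f"
abbreviation "R \<equiv> inv_sqrt_mat n S"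
abbreviation "canon_dual \<equiv> \<lambda>i. mat_inv n S *\<^sub>v f i"

lemma frame_inH: "i < N \<Longrightarrow> inH K n (f i)"
  using is_frame unfolding is_frame_def by auto

lemma frame_carrier: "i < N \<Longrightarrow> f i \<in> carrier_vec n"
  using frame_inH unfolding inH_def by auto

lemma frame_in_K: "i < N \<Longrightarrow> k < n \<Longrightarrow> f i $ k \<in> K"
  using frame_inH unfolding inH_def by auto

lemma inH_lincomb_frame:
  assumes "inH K n v"
  obtains c where "\<forall>i<N. c i \<in> K" and "v = lincomb_seq n c f {..<N}"
proof -
  have "v \<in> spanK K n f {..<N}" using is_frame assms unfolding is_frame_def by auto
  then show ?thesis using that unfolding spanK_def by auto
qed

lemma frame_op_pos_def: "pos_def_mat n S"
  unfolding pos_def_mat_def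
proof (intro conjI ballI impI)
  fix v :: "complex vec" assume v: "v \<in> carrier_vec n" and nz: "v \<noteq> 0\<^sub>v n"
  have "\<exists>i<N. v \<bullet>c f i \<noteq> 0"
  proof (rule ccontr)
    assume "\<not> (\<exists>i<N. v \<bullet>c f i \<noteq> 0)"
    then have orth: "\<And>i. i < N \<Longrightarrow> v \<bullet>c f i = 0" by auto
    have "v $ k = 0" if k: "k < n" for k
    proof -
      obtain c where e: "unit_vec n k = lincomb_seq n c f {..<N}"
        using inH_lincomb_frame[OF unit_vec_inH[OF k]] by metis
      have "v $ k = v \<bullet>c unit_vec n k" using v k by (simp add: cscalar_prod_unit_vec)
      also have "\<dots> = 0"
        unfolding e by (subst cscalar_prod_lincomb_right[OF v]) (auto simp: orth frame_carrier)
      finally show ?thesis .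
    qed
    with v nz show False by (metis carrier_vecD eq_vecI index_zero_vec(1) index_zero_vec(2))
  qed
  then obtain i where i: "i < N" "v \<bullet>c f i \<noteq> 0" by auto
  have "0 < (cmod (v \<bullet>c f i))\<^sup>2" using i by simp
  also have "\<dots> \<le> (\<Sum>i<N. (cmod (v \<bullet>c f i))\<^sup>2)" by (rule member_le_sum) (use i in auto)
  finally show "Re ((S *\<^sub>v v) \<bullet>c v) > 0" by (simp add: frame_op_form[OF v frame_carrier])
qed (auto simp: frame_op_hermitian)

lemma inv_sqrt_pos_def: "pos_def_mat n R"
  and inv_sqrt_square: "R * R * S = 1\<^sub>m n"
  using inv_sqrt_mat[OF frame_op_pos_def] .

lemma inv_sqrt_carrier: "R \<in> carrier_mat n n"
  and inv_sqrt_hermitian: "adj R = R"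
  using inv_sqrt_pos_def unfolding pos_def_mat_def by blast+

lemma mat_inv_frame_op: "mat_inv n S = R * R"
  by (rule mat_inv_eqI[OF frame_op_carrier mult_carrier_mat[OF inv_sqrt_carrier inv_sqrt_carrier] inv_sqrt_square])

lemma mat_inv_carrier: "mat_inv n S \<in> carrier_mat n n"
  unfolding mat_inv_frame_op by (rule mult_carrier_mat[OF inv_sqrt_carrier inv_sqrt_carrier])

lemma canon_dual_carrier: "canon_dual i \<in> carrier_vec n"
  using mat_inv_carrier unfolding carrier_vec_def carrier_mat_def by simp

lemma canon_dual_cscalar_prod:
  assumes i: "i < N" and j: "j < N"
  shows "canon_dual j \<bullet>c f i = (R *\<^sub>v f j) \<bullet>c (R *\<^sub>v f i)"
proof -
  have "canon_dual j = R *\<^sub>v (R *\<^sub>v f j)"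
    unfolding mat_inv_frame_op using inv_sqrt_carrier frame_carrier[OF j] by simp
  also have "\<dots> \<bullet>c f i = (R *\<^sub>v f j) \<bullet>c (adj R *\<^sub>v f i)"
    by (rule cscalar_prod_adj[OF inv_sqrt_carrier _ frame_carrier[OF i]])
      (use inv_sqrt_carrier frame_carrier[OF j] in simp)
  finally show ?thesis by (simp only: inv_sqrt_hermitian)
qed

lemma canon_dual_diag: "i < N \<Longrightarrow> canon_dual i \<bullet>c f i = of_real ((vnorm (R *\<^sub>v f i))\<^sup>2)"
  using inv_sqrt_carrier frame_carrier
  by (simp add: canon_dual_cscalar_prod cscalar_prod_self[of _ n] vnorm_def sum_nonneg)

lemma mat_inv_in_K: "k < n \<Longrightarrow> l < n \<Longrightarrow> mat_inv n S $$ (k,l) \<in> K"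
proof (cases "K = UNIV")
  case False
  then have KR: "K = \<real>" using real_or_complex by auto
  define Si where "Si = mat_inv n S"
  define B where "B = mat n n (\<lambda>(i,j). cnj (Si $$ (i,j)))"
  have Si: "Si \<in> carrier_mat n n" and SiS: "Si * S = 1\<^sub>m n"
    unfolding Si_def mat_inv_frame_op using inv_sqrt_carrier inv_sqrt_square by auto
  have "B * S = 1\<^sub>m n"
  proof (rule eq_matI)
    fix i j assume "i < dim_row (1\<^sub>m n)" "j < dim_col (1\<^sub>m n)"
    hence i: "i < n" and j: "j < n" by auto
    have "S $$ (l,j) \<in> \<real>" if "l < n" for l
      using frame_in_K KR that j by (auto simp: frame_op_index Reals_cnj_iff)
    then have "(B * S) $$ (i,j) = cnj (\<Sum>l<n. Si $$ (i,l) * S $$ (l,j))"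
      using i j index_mult_mat_sum[of B n n S n i j]
      by (auto simp: B_def Reals_cnj_iff intro!: sum.cong)
    also have "\<dots> = cnj ((Si * S) $$ (i,j))" by (simp only: index_mult_mat_sum[OF Si frame_op_carrier i j])
    also have "\<dots> = 1\<^sub>m n $$ (i,j)" using SiS i j by simp
    finally show "(B * S) $$ (i,j) = 1\<^sub>m n $$ (i,j)" .
  qed (auto simp: B_def)
  then have "Si = B" unfolding Si_def by (intro mat_inv_eqI[OF frame_op_carrier]) (simp_all add: B_def)
  then show "k < n \<Longrightarrow> l < n \<Longrightarrow> mat_inv n S $$ (k,l) \<in> K"
    unfolding KR Si_def B_def Reals_cnj_iff by (metis case_prod_conv index_mat(1))
qed simp

lemma canon_dual_inH: "i < N \<Longrightarrow> inH K n (canon_dual i)"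
  unfolding inH_def using canon_dual_carrier frame_carrier frame_in_K mat_inv_in_K
  by (auto simp: index_mult_mat_vec_sum[OF mat_inv_carrier] intro!: sum_in_K mult_in_K)

lemma mat_inv_frame_op_left: "mat_inv n S * S = 1\<^sub>m n"
  and mat_inv_frame_op_right: "S * mat_inv n S = 1\<^sub>m n"
  and mat_inv_frame_op_hermitian: "adj (mat_inv n S) = mat_inv n S"
  using mat_mult_left_right_inverse[OF mat_inv_carrier frame_op_carrier] inv_sqrt_square
    adj_mult[OF inv_sqrt_carrier inv_sqrt_carrier]
  by (simp_all add: mat_inv_frame_op inv_sqrt_hermitian)

lemma canon_dual_reconstruction:
  assumes v: "v \<in> carrier_vec n"
  shows "lincomb_seq n (\<lambda>i. v \<bullet>c f i) canon_dual {..<N} = v"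
proof -
  have "lincomb_seq n (\<lambda>i. v \<bullet>c f i) canon_dual {..<N}
      = mat_inv n S *\<^sub>v lincomb_seq n (\<lambda>i. v \<bullet>c f i) f {..<N}"
    by (rule mult_mat_vec_lincomb[OF mat_inv_carrier, symmetric]) (simp add: frame_carrier)
  also have "\<dots> = (mat_inv n S * S) *\<^sub>v v"
    by (simp add: frame_op_apply[OF v frame_carrier, symmetric]
        assoc_mult_mat_vec[OF mat_inv_carrier frame_op_carrier v])
  also have "\<dots> = v" using mat_inv_frame_op_left v by simp
  finally show ?thesis .
qed

lemma frame_reconstruction:
  assumes v: "v \<in> carrier_vec n"
  shows "lincomb_seq n (\<lambda>i. v \<bullet>c canon_dual i) f {..<N} = v"
proof -
  have "v \<bullet>c canon_dual i = (mat_inv n S *\<^sub>v v) \<bullet>c f i" if "i < N" for i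
    using cscalar_prod_adj[OF mat_inv_carrier v frame_carrier[OF that]] by (simp add: mat_inv_frame_op_hermitian)
  then have "lincomb_seq n (\<lambda>i. v \<bullet>c canon_dual i) f {..<N} = S *\<^sub>v (mat_inv n S *\<^sub>v v)"
    using mat_inv_carrier v
    by (auto simp: frame_op_apply frame_carrier lincomb_seq_def intro!: eq_vecI sum.cong)
  also have "\<dots> = (S * mat_inv n S) *\<^sub>v v" by (simp add: assoc_mult_mat_vec[OF frame_op_carrier mat_inv_carrier v])
  also have "\<dots> = v" using mat_inv_frame_op_right v by simp
  finally show ?thesis .
qed

lemma canon_dual_is_dual: "is_dual K n N f canon_dual"
proof -
  have "spanK K n canon_dual {..<N} = {v. inH K n v}"
  proof (intro equalityI subsetI)
    fix v assume "v \<in> spanK K n canon_dual {..<N}"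
    then show "v \<in> {v. inH K n v}" using canon_dual_inH
      unfolding spanK_def inH_def by (auto intro!: sum_in_K mult_in_K)
  next
    fix v assume "v \<in> {v. inH K n v}"
    then have "inH K n v" "v \<in> carrier_vec n" unfolding inH_def by auto
    then show "v \<in> spanK K n canon_dual {..<N}"
      using canon_dual_reconstruction[symmetric] cscalar_prod_in_K[OF _ frame_inH]
      unfolding spanK_def by blast
  qed
  then show ?thesis
    using canon_dual_inH canon_dual_reconstruction frame_reconstruction
    unfolding is_dual_def is_frame_def inH_def by auto
qed

lemma dual_carrier: "is_dual K n N f G \<Longrightarrow> i < N \<Longrightarrow> G i \<in> carrier_vec n"
  and dual_inH: "is_dual K n N f G \<Longrightarrow> i < N \<Longrightarrow> inH K n (G i)"
  and dual_reconstruction: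
    "is_dual K n N f G \<Longrightarrow> inH K n v \<Longrightarrow> lincomb_seq n (\<lambda>i. v \<bullet>c f i) G {..<N} = v"
  unfolding is_dual_def is_frame_def inH_def by auto

lemma dual_trace:
  assumes G: "is_dual K n N f G" and Q: "Q \<in> carrier_mat n n"
  shows "(\<Sum>i<N. G i \<bullet>c (Q *\<^sub>v f i)) = (\<Sum>r<n. cnj (Q $$ (r,r)))"
proof -
  \<comment> \<open>The reconstruction formula for the unit vectors says \<open>\<Sum>\<^sub>i G\<^sub>i f\<^sub>i\<^sup>* = I\<close>.\<close>
  have resolution: "(\<Sum>i<N. cnj (f i $ k) * G i $ r) = (if k = r then 1 else 0)"
    if k: "k < n" and r: "r < n" for k r
  proof -
    have "unit_vec n k \<bullet>c f i = cnj (f i $ k)" if "i < N" for i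
      using cscalar_prod_swap[OF frame_carrier[OF that] unit_vec_carrier] frame_carrier[OF that] k
      by (simp add: cscalar_prod_unit_vec)
    then have "(\<Sum>i<N. cnj (f i $ k) * G i $ r) = lincomb_seq n (\<lambda>i. unit_vec n k \<bullet>c f i) G {..<N} $ r"
      using r by simp
    also have "\<dots> = unit_vec n k $ r" using dual_reconstruction[OF G unit_vec_inH[OF k]] by simp
    finally show ?thesis using k r by auto
  qed
  have "(\<Sum>i<N. G i \<bullet>c (Q *\<^sub>v f i)) = (\<Sum>i<N. \<Sum>r<n. \<Sum>k<n. cnj (Q $$ (r,k)) * (cnj (f i $ k) * G i $ r))"
    using Q dual_carrier[OF G] frame_carrier
    by (auto simp: cscalar_prod_sum[of _ n] sum_distrib_left mult_ac intro!: sum.cong)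
  also have "\<dots> = (\<Sum>r<n. \<Sum>k<n. cnj (Q $$ (r,k)) * (\<Sum>i<N. cnj (f i $ k) * G i $ r))"
    by (subst sum.swap) (simp add: sum_distrib_left sum.swap[of _ "{..<N}"])
  also have "\<dots> = (\<Sum>r<n. cnj (Q $$ (r,r)))"
    by (simp add: resolution if_distrib[of "\<lambda>x. _ * x"] cong: if_cong)
  finally show ?thesis .
qed

lemma dual_cross_sum:
  assumes G: "is_dual K n N f G" and Q: "Q \<in> carrier_mat n n"
    and QK: "\<And>r k. r < n \<Longrightarrow> k < n \<Longrightarrow> Q $$ (r,k) \<in> K" and j: "j < N"
  shows "(\<Sum>i<N. (G j \<bullet>c (Q *\<^sub>v f i)) * (G i \<bullet>c f j)) = G j \<bullet>c (Q *\<^sub>v f j)"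
proof -
  define w where "w = adj Q *\<^sub>v G j"
  have "inH K n w"
    using Q QK dual_inH[OF G j] dual_carrier[OF G j]
    unfolding w_def inH_def by (auto simp: index_mult_mat_vec_sum[of _ n n] intro!: sum_in_K mult_in_K cnj_in_K)
  have w: "G j \<bullet>c (Q *\<^sub>v f i) = w \<bullet>c f i" if "i < N" for i
    unfolding w_def using cscalar_prod_adj[OF adj_carrier_mat[OF Q] dual_carrier[OF G j] frame_carrier[OF that]]
    by simp
  have "(\<Sum>i<N. (G j \<bullet>c (Q *\<^sub>v f i)) * (G i \<bullet>c f j)) = lincomb_seq n (\<lambda>i. w \<bullet>c f i) G {..<N} \<bullet>c f j"
    by (simp add: w cscalar_prod_lincomb_left[OF frame_carrier[OF j]])
  also have "\<dots> = G j \<bullet>c (Q *\<^sub>v f j)"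
    using dual_reconstruction[OF G \<open>inH K n w\<close>] w[OF j] by simp
  finally show ?thesis .
qed

end

section \<open>Splitting the frame\<close>

locale frame_split = frame +
  fixes U :: "nat set"
  assumes U_subset: "U \<subseteq> {..<N}"
    and spans_disjoint: "spanK K n f U \<inter> spanK K n f ({..<N} - U) = {0\<^sub>v n}"
begin

lemma finite_U [simp]: "finite U"
  using U_subset finite_subset by blast

lemma lincomb_U_eq_zero:
  assumes aK: "\<And>i. i < N \<Longrightarrow> a i \<in> K" and zero: "lincomb_seq n a f {..<N} = 0\<^sub>v n"
  shows "lincomb_seq n a f U = 0\<^sub>v n"
proof -
  have "lincomb_seq n a f U = lincomb_seq n (\<lambda>i. - a i) f ({..<N} - U)"
  proof (rule eq_vecI)
    fix k assume "k < dim_vec (lincomb_seq n (\<lambda>i. - a i) f ({..<N} - U))"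
    then have k: "k < n" by simp
    have "(\<Sum>i\<in>U. a i * f i $ k) + (\<Sum>i\<in>{..<N} - U. a i * f i $ k) = 0"
      using arg_cong[OF zero, of "\<lambda>v. v $ k"] k sum.subset_diff[OF U_subset, of "\<lambda>i. a i * f i $ k"]
      by (simp add: add.commute)
    then show "lincomb_seq n a f U $ k = lincomb_seq n (\<lambda>i. - a i) f ({..<N} - U) $ k"
      using k by (simp add: sum_negf eq_neg_iff_add_eq_0)
  qed simp
  moreover have "lincomb_seq n a f U \<in> spanK K n f U"
    using aK U_subset unfolding spanK_def by blast
  moreover have "lincomb_seq n (\<lambda>i. - a i) f ({..<N} - U) \<in> spanK K n f ({..<N} - U)"
    using aK uminus_in_K unfolding spanK_def by blast
  ultimately show ?thesis using spans_disjoint by auto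
qed

lemma lincomb_U_expansion:
  assumes dK: "\<And>i. i < N \<Longrightarrow> d i \<in> K" and j: "j < N" and fj: "f j = lincomb_seq n d f {..<N}"
  shows "lincomb_seq n d f U = (if j \<in> U then f j else 0\<^sub>v n)"
proof -
  define \<delta> where "\<delta> i = (if i = j then 1 else 0 :: complex)" for i
  have "lincomb_seq n (\<lambda>i. d i - \<delta> i) f {..<N} = 0\<^sub>v n"
    using j fj frame_carrier[OF j] by (simp add: \<delta>_def lincomb_seq_diff lincomb_seq_delta)
  then have zero: "lincomb_seq n d f U - lincomb_seq n \<delta> f U = 0\<^sub>v n"
    using dK unfolding lincomb_seq_diff[symmetric] by (intro lincomb_U_eq_zero) (auto simp: \<delta>_def)
  have "lincomb_seq n d f U = lincomb_seq n \<delta> f U"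
  proof (rule eq_vecI)
    fix r assume "r < dim_vec (lincomb_seq n \<delta> f U)"
    then show "lincomb_seq n d f U $ r = lincomb_seq n \<delta> f U $ r"
      using arg_cong[OF zero, of "\<lambda>v. v $ r"] by simp
  qed simp
  then show ?thesis using frame_carrier[OF j] unfolding \<delta>_def[abs_def] by (simp add: lincomb_seq_delta)
qed

lemma split_projection:
  obtains Q where "Q \<in> carrier_mat n n" and "\<And>r k. r < n \<Longrightarrow> k < n \<Longrightarrow> Q $$ (r,k) \<in> K"
    and "\<And>j. j < N \<Longrightarrow> Q *\<^sub>v f j = (if j \<in> U then f j else 0\<^sub>v n)"
proof -
  have "\<forall>k. \<exists>c. k < n \<longrightarrow> (\<forall>i<N. c i \<in> K) \<and> unit_vec n k = lincomb_seq n c f {..<N}"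
    using inH_lincomb_frame[OF unit_vec_inH] by metis
  then obtain cf where cfK: "\<And>k i. k < n \<Longrightarrow> i < N \<Longrightarrow> cf k i \<in> K"
    and cf: "\<And>k. k < n \<Longrightarrow> unit_vec n k = lincomb_seq n (cf k) f {..<N}" by metis
  \<comment> \<open>\<open>Q\<close> sends \<open>e\<^sub>k = \<Sum>\<^sub>i cf k i f\<^sub>i\<close> to the part of this sum over \<open>U\<close>.\<close>
  define Q where "Q = mat n n (\<lambda>(r,k). \<Sum>i\<in>U. cf k i * f i $ r)"
  have Q: "Q \<in> carrier_mat n n" unfolding Q_def by simp
  have QK: "Q $$ (r,k) \<in> K" if "r < n" "k < n" for r k
    using that U_subset cfK frame_in_K unfolding Q_def by (auto intro!: sum_in_K mult_in_K)
  have "Q *\<^sub>v f j = (if j \<in> U then f j else 0\<^sub>v n)" if j: "j < N" for j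
  proof -
    define d where "d i = (\<Sum>k<n. f j $ k * cf k i)" for i
    have coeffs: "(\<Sum>k<n. (\<Sum>i\<in>A. cf k i * f i $ r) * f j $ k) = lincomb_seq n d f A $ r"
      if r: "r < n" and A: "finite A" for r A
    proof -
      have "(\<Sum>k<n. (\<Sum>i\<in>A. cf k i * f i $ r) * f j $ k) = (\<Sum>i\<in>A. \<Sum>k<n. cf k i * f i $ r * f j $ k)"
        by (simp add: sum_distrib_right sum.swap[of _ A])
      also have "\<dots> = lincomb_seq n d f A $ r"
        using r by (simp add: d_def sum_distrib_left sum_distrib_right mult_ac)
      finally show ?thesis .
    qed
    have "Q *\<^sub>v f j = lincomb_seq n d f U"
    proof (rule eq_vecI)
      fix r assume "r < dim_vec (lincomb_seq n d f U)"
      then have r: "r < n" by simp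
      have "(Q *\<^sub>v f j) $ r = (\<Sum>k<n. (\<Sum>i\<in>U. cf k i * f i $ r) * f j $ k)"
        by (subst index_mult_mat_vec_sum[OF Q frame_carrier[OF j] r]) (auto simp: Q_def r intro!: sum.cong)
      then show "(Q *\<^sub>v f j) $ r = lincomb_seq n d f U $ r" using coeffs[OF r] by simp
    qed (use Q in simp)
    also have "\<dots> = (if j \<in> U then f j else 0\<^sub>v n)"
    proof (rule lincomb_U_expansion[OF _ j])
      show "d i \<in> K" if "i < N" for i
        using that frame_in_K cfK j unfolding d_def by (auto intro!: sum_in_K mult_in_K)
      show "f j = lincomb_seq n d f {..<N}"
      proof (rule eq_vecI)
        fix r assume "r < dim_vec (lincomb_seq n d f {..<N})"
        then have r: "r < n" by simp
        have "f j $ r = (\<Sum>k<n. unit_vec n k $ r * f j $ k)"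
          using r by (simp add: if_distrib[of "\<lambda>x. x * _"] cong: if_cong)
        also have "\<dots> = (\<Sum>k<n. (\<Sum>i<N. cf k i * f i $ r) * f j $ k)"
          using r by (intro sum.cong) (simp_all add: cf)
        also have "\<dots> = lincomb_seq n d f {..<N} $ r" by (rule coeffs[OF r]) simp
        finally show "f j $ r = lincomb_seq n d f {..<N} $ r" .
      qed (use frame_carrier[OF j] in simp)
    qed
    finally show ?thesis .
  qed
  with that Q QK show ?thesis by blast
qed

lemma dual_diag_sum:
  assumes G: "is_dual K n N f G" and G': "is_dual K n N f G'"
  shows "(\<Sum>i\<in>U. G i \<bullet>c f i) = (\<Sum>i\<in>U. G' i \<bullet>c f i)"
proof -
  obtain Q where Q: "Q \<in> carrier_mat n n"
    and Qf: "\<And>j. j < N \<Longrightarrow> Q *\<^sub>v f j = (if j \<in> U then f j else 0\<^sub>v n)"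
    using split_projection by metis
  have "(\<Sum>i\<in>U. H i \<bullet>c f i) = (\<Sum>r<n. cnj (Q $$ (r,r)))" if H: "is_dual K n N f H" for H
  proof -
    have "(\<Sum>i<N. H i \<bullet>c (Q *\<^sub>v f i)) = (\<Sum>i<N. if i \<in> U then H i \<bullet>c f i else 0)"
      using dual_carrier[OF H] by (intro sum.cong) (auto simp: Qf)
    then have "(\<Sum>i\<in>U. H i \<bullet>c f i) = (\<Sum>i<N. H i \<bullet>c (Q *\<^sub>v f i))"
      using U_subset by (simp add: sum.inter_restrict[symmetric] Int_absorb1)
    also have "\<dots> = (\<Sum>r<n. cnj (Q $$ (r,r)))" by (rule dual_trace[OF H Q])
    finally show ?thesis .
  qed
  then show ?thesis using G G' by presburger
qed

lemma dual_cross_sum_split: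
  assumes G: "is_dual K n N f G" and j: "j \<in> U"
  shows "(\<Sum>i\<in>U. (G j \<bullet>c f i) * (G i \<bullet>c f j)) = G j \<bullet>c f j"
proof -
  obtain Q where Q: "Q \<in> carrier_mat n n" and QK: "\<And>r k. r < n \<Longrightarrow> k < n \<Longrightarrow> Q $$ (r,k) \<in> K"
    and Qf: "\<And>j. j < N \<Longrightarrow> Q *\<^sub>v f j = (if j \<in> U then f j else 0\<^sub>v n)"
    using split_projection by metis
  have jN: "j < N" using j U_subset by auto
  have "(\<Sum>i<N. (G j \<bullet>c (Q *\<^sub>v f i)) * (G i \<bullet>c f j))
      = (\<Sum>i<N. if i \<in> U then (G j \<bullet>c f i) * (G i \<bullet>c f j) else 0)"
    using dual_carrier[OF G jN] by (intro sum.cong) (auto simp: Qf)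
  then have "(\<Sum>i\<in>U. (G j \<bullet>c f i) * (G i \<bullet>c f j)) = (\<Sum>i<N. (G j \<bullet>c (Q *\<^sub>v f i)) * (G i \<bullet>c f j))"
    using U_subset by (simp add: sum.inter_restrict[symmetric] Int_absorb1)
  also have "\<dots> = G j \<bullet>c f j"
    using dual_cross_sum[OF G Q QK jN] Qf[OF jN] j by simp
  finally show ?thesis .
qed

end

section \<open>Erasure operators\<close>

lemma analysis_op_mult_vec:
  assumes f: "\<And>i. i < N \<Longrightarrow> f i \<in> carrier_vec n" and v: "v \<in> carrier_vec n"
  shows "analysis_op n N f *\<^sub>v v = vec N (\<lambda>i. v \<bullet>c f i)"
proof (rule eq_vecI)
  fix i assume "i < dim_vec (vec N (\<lambda>i. v \<bullet>c f i))"
  then have i: "i < N" by simp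
  have "(analysis_op n N f *\<^sub>v v) $ i = (\<Sum>l<n. cnj (f i $ l) * v $ l)"
    using i v by (subst index_mult_mat_vec_sum[of _ N n]) (auto simp: analysis_op_def intro!: sum.cong)
  also have "\<dots> = v \<bullet>c f i" using f[OF i] by (simp add: cscalar_prod_sum[of _ n] mult.commute)
  finally show "(analysis_op n N f *\<^sub>v v) $ i = vec N (\<lambda>i. v \<bullet>c f i) $ i" using i by simp
qed (simp add: analysis_op_def)

lemma lincomb_seq_singleton: "G i \<in> carrier_vec n \<Longrightarrow> lincomb_seq n c G {i} = c i \<cdot>\<^sub>v G i"
  by (intro eq_vecI) auto

lemma lincomb_seq_pair:
  "i \<noteq> j \<Longrightarrow> G i \<in> carrier_vec n \<Longrightarrow> G j \<in> carrier_vec n \<Longrightarrow>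
   lincomb_seq n c G {i,j} = c i \<cdot>\<^sub>v G i + c j \<cdot>\<^sub>v G j"
  by (intro eq_vecI) auto

lemma cscalar_prod_add_smult_left:
  fixes a b w :: "complex vec"
  assumes "a \<in> carrier_vec n" "b \<in> carrier_vec n" "w \<in> carrier_vec n"
  shows "(x \<cdot>\<^sub>v a + y \<cdot>\<^sub>v b) \<bullet>c w = x * (a \<bullet>c w) + y * (b \<bullet>c w)"
  using assms by (simp add: cscalar_prod_sum[of w n] sum.distrib sum_distrib_left algebra_simps)

lemma smult_vec_eq_zero_cancel:
  fixes v :: "complex vec"
  assumes "v \<in> carrier_vec n" and "l \<noteq> 0" and "l \<cdot>\<^sub>v v = 0\<^sub>v n"
  shows "v = 0\<^sub>v n"
proof -
  have "v = (1 / l) \<cdot>\<^sub>v (l \<cdot>\<^sub>v v)" using assms(2) by (simp add: smult_smult_assoc)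
  also have "\<dots> = 0\<^sub>v n" unfolding assms(3) by (intro eq_vecI) auto
  finally show ?thesis .
qed

lemma cmod_quadratic_root_le:
  fixes l :: complex and A B c k :: real
  assumes A: "0 \<le> A" "A \<le> c" and B: "0 \<le> B" "B \<le> c" and k: "0 \<le> k"
    and eq: "(l - complex_of_real A) * (l - complex_of_real B) = complex_of_real k"
  shows "cmod l \<le> c + sqrt k"
proof -
  define m where "m = (A + B) / 2"
  define t where "t = (A - B) / 2"
  define s where "s = sqrt (t\<^sup>2 + k)"
  have s0: "0 \<le> s" unfolding s_def using k by simp
  have ss: "s * s = t\<^sup>2 + k" unfolding s_def using k by (simp add: power2_eq_square[symmetric])
  have "(l - complex_of_real m - complex_of_real s) * (l - complex_of_real m + complex_of_real s)
      = (l - complex_of_real A) * (l - complex_of_real B) + complex_of_real (t\<^sup>2 + k - s * s) - complex_of_real k"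
    unfolding m_def t_def
    by (simp add: algebra_simps power2_eq_square of_real_mult[symmetric] del: of_real_mult) (simp add: field_simps)
  also have "\<dots> = 0" using eq ss by simp
  finally have "l - complex_of_real m - complex_of_real s = 0 \<or> l - complex_of_real m + complex_of_real s = 0"
    by (simp only: mult_eq_0_iff)
  then have "l = complex_of_real (m + s) \<or> l = complex_of_real (m - s)"
    by (auto simp: algebra_simps)
  then have "cmod l = \<bar>m + s\<bar> \<or> cmod l = \<bar>m - s\<bar>" by (metis norm_of_real)
  moreover have "s \<le> \<bar>t\<bar> + sqrt k"
    using sqrt_add_le_add_sqrt[of "t\<^sup>2" k] k unfolding s_def by simp
  moreover have "m + \<bar>t\<bar> \<le> c" and "0 \<le> m" unfolding m_def t_def using A B by (auto simp: abs_if field_simps)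
  ultimately show ?thesis using s0 k by auto
qed

lemma sqrt_le_Re_csqrt:
  fixes y :: complex and k :: real
  assumes k: "0 \<le> k" and y: "k \<le> Re y"
  shows "sqrt k \<le> Re (csqrt y)"
proof -
  have "Re y = (Re (csqrt y))\<^sup>2 - (Im (csqrt y))\<^sup>2"
    using power2_csqrt[of y] by (metis Re_power2)
  then have "k \<le> (Re (csqrt y))\<^sup>2" using y by (smt (verit) zero_le_power2)
  then show ?thesis using Re_csqrt[of y] real_sqrt_le_mono by fastforce
qed

lemma eigenvector_const_diag_2x2:
  fixes b1 b2 c w :: complex
  assumes ww: "w * w = b1 * b2"
  obtains a b where "a \<noteq> 0 \<or> b \<noteq> 0" "a * c + b * b1 = (c + w) * a" "a * b2 + b * c = (c + w) * b"
proof (cases "b1 = 0")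
  case True
  then have "w = 0" using ww by simp
  with True that[of 0 1] show ?thesis by simp
next
  case False
  with ww that[of b1 w] show ?thesis by (simp add: algebra_simps)
qed

locale erasure = frame +
  fixes p :: "nat \<Rightarrow> real"
  assumes dim_pos: "0 < n" and weight_pos: "\<And>i. i < N \<Longrightarrow> 0 < weight_num n N p i"
begin

abbreviation "q \<equiv> weight_num n N p"

definition "erasure_diag \<Lambda> = mat N N (\<lambda>(i,j). if i = j \<and> i \<in> \<Lambda> then complex_of_real (q i) else 0)"
definition "erasure_op G \<Lambda> = synthesis_op n N G * erasure_diag \<Lambda> * analysis_op n N f"
definition "erasure_radius G \<Lambda> = spectral_radius (erasure_op G \<Lambda>)"

lemma erasure_op_dim [simp]: "dim_row (erasure_op G \<Lambda>) = n" "dim_col (erasure_op G \<Lambda>) = n"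
  unfolding erasure_op_def erasure_diag_def synthesis_op_def analysis_op_def by simp_all

lemma erasure_op_carrier: "erasure_op G \<Lambda> \<in> carrier_mat n n"
  unfolding carrier_mat_def by simp

lemma erasure_op_apply:
  assumes L: "\<Lambda> \<subseteq> {..<N}" and v: "v \<in> carrier_vec n"
  shows "erasure_op G \<Lambda> *\<^sub>v v = lincomb_seq n (\<lambda>i. complex_of_real (q i) * (v \<bullet>c f i)) G \<Lambda>"
proof -
  define Sy where "Sy = synthesis_op n N G"
  define An where "An = analysis_op n N f"
  have Sy: "Sy \<in> carrier_mat n N" unfolding Sy_def synthesis_op_def by simp
  have An: "An \<in> carrier_mat N n" unfolding An_def analysis_op_def by simp
  have D: "erasure_diag \<Lambda> \<in> carrier_mat N N" unfolding erasure_diag_def by simp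
  have DAv: "erasure_diag \<Lambda> *\<^sub>v (An *\<^sub>v v) = vec N (\<lambda>j. if j \<in> \<Lambda> then complex_of_real (q j) * (v \<bullet>c f j) else 0)"
  proof (rule eq_vecI)
    fix j assume "j < dim_vec (vec N (\<lambda>j. if j \<in> \<Lambda> then complex_of_real (q j) * (v \<bullet>c f j) else 0))"
    then have j: "j < N" by simp
    have "(erasure_diag \<Lambda> *\<^sub>v (An *\<^sub>v v)) $ j = (\<Sum>i<N. erasure_diag \<Lambda> $$ (j,i) * (An *\<^sub>v v) $ i)"
      by (rule index_mult_mat_vec_sum[OF D _ j]) (use An v in simp)
    also have "\<dots> = (\<Sum>i<N. if i = j then (if j \<in> \<Lambda> then complex_of_real (q j) * (v \<bullet>c f j) else 0) else 0)"
      by (rule sum.cong[OF refl])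
        (use j in \<open>auto simp: erasure_diag_def An_def analysis_op_mult_vec[OF frame_carrier v]\<close>)
    finally show "(erasure_diag \<Lambda> *\<^sub>v (An *\<^sub>v v)) $ j
        = vec N (\<lambda>j. if j \<in> \<Lambda> then complex_of_real (q j) * (v \<bullet>c f j) else 0) $ j"
      using j by simp
  qed (use D in simp)
  have "erasure_op G \<Lambda> *\<^sub>v v = Sy *\<^sub>v (erasure_diag \<Lambda> *\<^sub>v (An *\<^sub>v v))"
    unfolding erasure_op_def Sy_def[symmetric] An_def[symmetric] using Sy D An v
    by (subst assoc_mult_mat_vec[of _ n N _ n]) auto
  also have "\<dots> = lincomb_seq n (\<lambda>i. complex_of_real (q i) * (v \<bullet>c f i)) G \<Lambda>"
  proof (rule eq_vecI)
    fix k assume "k < dim_vec (lincomb_seq n (\<lambda>i. complex_of_real (q i) * (v \<bullet>c f i)) G \<Lambda>)"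
    then have k: "k < n" by simp
    have "(Sy *\<^sub>v (erasure_diag \<Lambda> *\<^sub>v (An *\<^sub>v v))) $ k
        = (\<Sum>j<N. if j \<in> \<Lambda> then complex_of_real (q j) * (v \<bullet>c f j) * G j $ k else 0)"
      using k D An v
      by (subst index_mult_mat_vec_sum[OF Sy _ k]) (auto simp: DAv Sy_def synthesis_op_def intro!: sum.cong)
    also have "\<dots> = (\<Sum>j\<in>\<Lambda>. complex_of_real (q j) * (v \<bullet>c f j) * G j $ k)"
      using L by (simp add: sum.If_cases Int_absorb1)
    finally show "(Sy *\<^sub>v (erasure_diag \<Lambda> *\<^sub>v (An *\<^sub>v v))) $ k
        = lincomb_seq n (\<lambda>i. complex_of_real (q i) * (v \<bullet>c f i)) G \<Lambda> $ k"
      using k by simp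
  qed (use Sy in simp)
  finally show ?thesis .
qed

lemma eigenvalue_le_erasure_radius:
  assumes "v \<in> carrier_vec n" and "v \<noteq> 0\<^sub>v n" and "erasure_op G \<Lambda> *\<^sub>v v = l \<cdot>\<^sub>v v"
  shows "cmod l \<le> erasure_radius G \<Lambda>"
proof -
  have "eigenvector (erasure_op G \<Lambda>) v l" unfolding eigenvector_def using erasure_op_carrier assms by auto
  then have "l \<in> spectrum (erasure_op G \<Lambda>)" unfolding spectrum_def eigenvalue_def by auto
  then show ?thesis
    unfolding erasure_radius_def using spectral_radius_mem_max(2)[OF erasure_op_carrier dim_pos] by auto
qed

lemma erasure_radius_le:
  assumes "\<And>l v. v \<in> carrier_vec n \<Longrightarrow> v \<noteq> 0\<^sub>v n \<Longrightarrow> erasure_op G \<Lambda> *\<^sub>v v = l \<cdot>\<^sub>v v \<Longrightarrow> cmod l \<le> B"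
  shows "erasure_radius G \<Lambda> \<le> B"
proof -
  obtain l where l: "l \<in> spectrum (erasure_op G \<Lambda>)" and r: "erasure_radius G \<Lambda> = cmod l"
    using spectral_radius_mem_max(1)[OF erasure_op_carrier dim_pos] unfolding erasure_radius_def by auto
  from l obtain v where "eigenvector (erasure_op G \<Lambda>) v l" unfolding spectrum_def eigenvalue_def by auto
  then have "v \<in> carrier_vec n" "v \<noteq> 0\<^sub>v n" "erasure_op G \<Lambda> *\<^sub>v v = l \<cdot>\<^sub>v v"
    unfolding eigenvector_def using erasure_op_carrier by auto
  then show ?thesis using assms r by simp
qed

lemma erasure_radius_nonneg: "0 \<le> erasure_radius G \<Lambda>"
proof -
  obtain l where "erasure_radius G \<Lambda> = cmod l"
    using spectral_radius_mem_max(1)[OF erasure_op_carrier dim_pos] unfolding erasure_radius_def by auto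
  then show ?thesis by simp
qed

lemma Rm_eq_Max: "Rm n N p m f G = Max (erasure_radius G ` {\<Lambda>. \<Lambda> \<subseteq> {..<N} \<and> card \<Lambda> = m})"
proof -
  have "Dset n N p m = erasure_diag ` {\<Lambda>. \<Lambda> \<subseteq> {..<N} \<and> card \<Lambda> = m}"
    unfolding Dset_def erasure_diag_def by blast
  then show ?thesis unfolding Rm_def erasure_radius_def erasure_op_def by (simp add: image_image)
qed

lemma finite_erasure_sets: "finite {\<Lambda>. \<Lambda> \<subseteq> {..<N} \<and> card \<Lambda> = m}"
  by (rule finite_subset[of _ "Pow {..<N}"]) auto

lemma erasure_radius_le_Rm: "\<Lambda> \<subseteq> {..<N} \<Longrightarrow> card \<Lambda> = m \<Longrightarrow> erasure_radius G \<Lambda> \<le> Rm n N p m f G"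
  unfolding Rm_eq_Max by (rule Max_ge) (use finite_erasure_sets in auto)

lemma Rm_le:
  assumes "m \<le> N" and "\<And>\<Lambda>. \<Lambda> \<subseteq> {..<N} \<Longrightarrow> card \<Lambda> = m \<Longrightarrow> erasure_radius G \<Lambda> \<le> B"
  shows "Rm n N p m f G \<le> B"
proof -
  have "\<exists>\<Lambda>. \<Lambda> \<subseteq> {..<N} \<and> card \<Lambda> = m" using assms(1) by (intro exI[of _ "{..<m}"]) auto
  then show ?thesis
    unfolding Rm_eq_Max using finite_erasure_sets assms(2) by (intro Max.boundedI) auto
qed

lemma erasure_radius_singleton:
  assumes i: "i < N" and Gi: "G i \<in> carrier_vec n"
  shows "erasure_radius G {i} = q i * cmod (G i \<bullet>c f i)"
proof (rule antisym)
  have fi: "f i \<in> carrier_vec n" using frame_carrier[OF i] .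
  have M: "erasure_op G {i} *\<^sub>v v = (complex_of_real (q i) * (v \<bullet>c f i)) \<cdot>\<^sub>v G i"
    if "v \<in> carrier_vec n" for v
    using erasure_op_apply[OF _ that, of "{i}"] i lincomb_seq_singleton[of G i n] Gi by simp
  show "erasure_radius G {i} \<le> q i * cmod (G i \<bullet>c f i)"
  proof (rule erasure_radius_le)
    fix l v assume v: "v \<in> carrier_vec n" and nz: "v \<noteq> 0\<^sub>v n" and ev: "erasure_op G {i} *\<^sub>v v = l \<cdot>\<^sub>v v"
    show "cmod l \<le> q i * cmod (G i \<bullet>c f i)"
    proof (cases "v \<bullet>c f i = 0")
      case True
      then have "l \<cdot>\<^sub>v v = 0 \<cdot>\<^sub>v G i" using ev M[OF v] by simp
      also have "\<dots> = 0\<^sub>v n" using Gi by (intro eq_vecI) auto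
      finally have "l = 0" using smult_vec_eq_zero_cancel[OF v] nz by blast
      then show ?thesis using weight_pos[OF i] by simp
    next
      case False
      have "l * (v \<bullet>c f i) = (l \<cdot>\<^sub>v v) \<bullet>c f i" by (rule cscalar_prod_smult_left[OF v fi, symmetric])
      also have "\<dots> = (complex_of_real (q i) * (v \<bullet>c f i)) * (G i \<bullet>c f i)"
        unfolding ev[symmetric] M[OF v] by (rule cscalar_prod_smult_left[OF Gi fi])
      finally have "l = complex_of_real (q i) * (G i \<bullet>c f i)" using False by (simp add: mult_ac)
      then show ?thesis using weight_pos[OF i] by (simp add: norm_mult)
    qed
  qed
  show "q i * cmod (G i \<bullet>c f i) \<le> erasure_radius G {i}"
  proof (cases "G i \<bullet>c f i = 0")
    case True
    then show ?thesis using erasure_radius_nonneg by simp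
  next
    case False
    then have "G i \<noteq> 0\<^sub>v n" by (auto simp: cscalar_prod_sum[OF fi])
    from eigenvalue_le_erasure_radius[OF Gi this M[OF Gi]] show ?thesis
      using weight_pos[OF i] by (simp add: norm_mult)
  qed
qed

lemma erasure_op_pair_apply:
  assumes i: "i < N" and j: "j < N" and ij: "i \<noteq> j" and G: "G i \<in> carrier_vec n" "G j \<in> carrier_vec n"
    and v: "v \<in> carrier_vec n"
  shows "erasure_op G {i,j} *\<^sub>v v
    = (complex_of_real (q i) * (v \<bullet>c f i)) \<cdot>\<^sub>v G i + (complex_of_real (q j) * (v \<bullet>c f j)) \<cdot>\<^sub>v G j"
  using erasure_op_apply[OF _ v, of "{i,j}" G] i j lincomb_seq_pair[OF ij G] by simp

lemma erasure_radius_pair_le: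
  assumes i: "i < N" and j: "j < N" and ij: "i \<noteq> j"
    and Gi: "G i \<in> carrier_vec n" and Gj: "G j \<in> carrier_vec n"
    and ai: "G i \<bullet>c f i = complex_of_real a" and aj: "G j \<bullet>c f j = complex_of_real b"
    and A: "0 \<le> q i * a" "q i * a \<le> c" and B: "0 \<le> q j * b" "q j * b \<le> c"
    and k: "0 \<le> k" and prod: "complex_of_real (q i * q j) * (G j \<bullet>c f i) * (G i \<bullet>c f j) = complex_of_real k"
  shows "erasure_radius G {i,j} \<le> c + sqrt k"
proof (rule erasure_radius_le)
  fix l v assume v: "v \<in> carrier_vec n" and nz: "v \<noteq> 0\<^sub>v n" and ev: "erasure_op G {i,j} *\<^sub>v v = l \<cdot>\<^sub>v v"
  define \<alpha> where "\<alpha> = v \<bullet>c f i"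
  define \<beta> where "\<beta> = v \<bullet>c f j"
  have M: "l \<cdot>\<^sub>v v = (complex_of_real (q i) * \<alpha>) \<cdot>\<^sub>v G i + (complex_of_real (q j) * \<beta>) \<cdot>\<^sub>v G j"
    unfolding \<alpha>_def \<beta>_def ev[symmetric] by (rule erasure_op_pair_apply[OF i j ij Gi Gj v])
  \<comment> \<open>Pairing \<open>M v = l v\<close> with \<open>f\<^sub>i\<close> and \<open>f\<^sub>j\<close> gives the eigen-equations of a \<open>2 \<times> 2\<close> matrix for \<open>(\<alpha>, \<beta>)\<close>.\<close>
  have e1: "(l - complex_of_real (q i * a)) * \<alpha> = complex_of_real (q j) * \<beta> * (G j \<bullet>c f i)"
    using arg_cong[OF M, of "\<lambda>x. x \<bullet>c f i"] frame_carrier[OF i] v Gi Gj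
    by (simp add: cscalar_prod_smult_left[of _ n] cscalar_prod_add_smult_left[of _ n] ai \<alpha>_def algebra_simps)
  have e2: "(l - complex_of_real (q j * b)) * \<beta> = complex_of_real (q i) * \<alpha> * (G i \<bullet>c f j)"
    using arg_cong[OF M, of "\<lambda>x. x \<bullet>c f j"] frame_carrier[OF j] v Gi Gj
    by (simp add: cscalar_prod_smult_left[of _ n] cscalar_prod_add_smult_left[of _ n] aj \<beta>_def algebra_simps)
  have "l = 0 \<or> \<alpha> \<noteq> 0 \<or> \<beta> \<noteq> 0"
  proof (rule ccontr)
    assume "\<not> ?thesis"
    then have "l \<noteq> 0" and "l \<cdot>\<^sub>v v = 0\<^sub>v n" using M Gi Gj by (auto intro!: eq_vecI)
    then show False using smult_vec_eq_zero_cancel[OF v] nz by blast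
  qed
  then consider "l = 0" | "\<alpha> = 0" "\<beta> \<noteq> 0" | "\<beta> = 0" "\<alpha> \<noteq> 0" | "\<alpha> \<noteq> 0" "\<beta> \<noteq> 0" by blast
  then show "cmod l \<le> c + sqrt k"
  proof cases
    case 1
    then show ?thesis using A k by simp
  next
    case 2
    then have "l = complex_of_real (q j * b)" using e2 by simp
    then have "cmod l = q j * b" using B(1) by (simp only: norm_of_real abs_of_nonneg)
    then show ?thesis using B real_sqrt_ge_zero[OF k] by linarith
  next
    case 3
    then have "l = complex_of_real (q i * a)" using e1 by simp
    then have "cmod l = q i * a" using A(1) by (simp only: norm_of_real abs_of_nonneg)
    then show ?thesis using A real_sqrt_ge_zero[OF k] by linarith
  next
    case 4
    have "(l - complex_of_real (q i * a)) * (l - complex_of_real (q j * b)) * (\<alpha> * \<beta>)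
        = complex_of_real (q i * q j) * (G j \<bullet>c f i) * (G i \<bullet>c f j) * (\<alpha> * \<beta>)"
      using arg_cong2[OF e1 e2, of "(*)"] by (simp add: mult_ac)
    then have "(l - complex_of_real (q i * a)) * (l - complex_of_real (q j * b)) = complex_of_real k"
      using 4 prod by simp
    then show ?thesis by (rule cmod_quadratic_root_le[OF A B k])
  qed
qed

lemma erasure_radius_pair_ge:
  assumes i: "i < N" and j: "j < N" and ij: "i \<noteq> j"
    and Gi: "G i \<in> carrier_vec n" and Gj: "G j \<in> carrier_vec n"
    and ai: "G i \<bullet>c f i = complex_of_real (c / q i)" and aj: "G j \<bullet>c f j = complex_of_real (c / q j)"
    and k: "0 \<le> k" and prod: "k \<le> Re (complex_of_real (q i * q j) * (G j \<bullet>c f i) * (G i \<bullet>c f j))"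
  shows "c + sqrt k \<le> erasure_radius G {i,j}"
proof -
  define b1 where "b1 = complex_of_real (q i) * (G j \<bullet>c f i)"
  define b2 where "b2 = complex_of_real (q j) * (G i \<bullet>c f j)"
  define w where "w = csqrt (b1 * b2)"
  have ww: "w * w = b1 * b2" unfolding w_def using power2_csqrt[of "b1 * b2"] by (simp add: power2_eq_square)
  have b1b2: "b1 * b2 = complex_of_real (q i * q j) * (G j \<bullet>c f i) * (G i \<bullet>c f j)"
    unfolding b1_def b2_def by (simp add: mult_ac)
  have "k \<le> Re (b1 * b2)" unfolding b1b2 by (rule prod)
  then have "sqrt k \<le> Re w" unfolding w_def by (rule sqrt_le_Re_csqrt[OF k])
  define l where "l = complex_of_real c + w"
  have le: "c + sqrt k \<le> Re l" unfolding l_def using \<open>sqrt k \<le> Re w\<close> by simp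
  obtain a b :: complex where ab: "a \<noteq> 0 \<or> b \<noteq> 0"
    and eqa: "a * complex_of_real c + b * b1 = l * a" and eqb: "a * b2 + b * complex_of_real c = l * b"
    unfolding l_def by (rule eigenvector_const_diag_2x2[OF ww])
  define v where "v = a \<cdot>\<^sub>v G i + b \<cdot>\<^sub>v G j"
  have v: "v \<in> carrier_vec n" unfolding v_def using Gi Gj by simp
  have "v \<bullet>c f i = a * complex_of_real (c / q i) + b * (G j \<bullet>c f i)"
    unfolding v_def ai[symmetric] by (rule cscalar_prod_add_smult_left[OF Gi Gj frame_carrier[OF i]])
  then have "complex_of_real (q i) * (v \<bullet>c f i) = a * complex_of_real c + b * b1"
    using weight_pos[OF i] unfolding b1_def by (simp add: algebra_simps of_real_divide)
  then have qa: "complex_of_real (q i) * (v \<bullet>c f i) = l * a" using eqa by simp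
  have "v \<bullet>c f j = a * (G i \<bullet>c f j) + b * complex_of_real (c / q j)"
    unfolding v_def aj[symmetric] by (rule cscalar_prod_add_smult_left[OF Gi Gj frame_carrier[OF j]])
  then have "complex_of_real (q j) * (v \<bullet>c f j) = a * b2 + b * complex_of_real c"
    using weight_pos[OF j] unfolding b2_def by (simp add: algebra_simps of_real_divide)
  then have qb: "complex_of_real (q j) * (v \<bullet>c f j) = l * b" using eqb by simp
  have "erasure_op G {i,j} *\<^sub>v v = (l * a) \<cdot>\<^sub>v G i + (l * b) \<cdot>\<^sub>v G j"
    unfolding erasure_op_pair_apply[OF i j ij Gi Gj v] qa qb ..
  also have "\<dots> = l \<cdot>\<^sub>v v" unfolding v_def using Gi Gj by (intro eq_vecI) (auto simp: algebra_simps)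
  finally have ev: "erasure_op G {i,j} *\<^sub>v v = l \<cdot>\<^sub>v v" .
  show ?thesis
  proof (cases "v = 0\<^sub>v n")
    case True
    then have "l * a = 0" "l * b = 0"
      using qa qb frame_carrier[OF i] frame_carrier[OF j] by (auto simp: cscalar_prod_sum[of _ n])
    then have "l = 0" using ab by auto
    then show ?thesis using le erasure_radius_nonneg[of G "{i,j}"] by simp
  next
    case False
    have "cmod l \<le> erasure_radius G {i,j}"
      by (rule eigenvalue_le_erasure_radius[OF v False ev])
    then show ?thesis using le complex_Re_le_cmod[of l] by linarith
  qed
qed

end

section \<open>Optimality of the canonical dual\<close>

locale optimal_setting = frame_split + erasure +
  fixes cmax \<kappa> :: real
  assumes cmax_eq: "cmax = Max {q i * (vnorm (R *\<^sub>v f i))\<^sup>2 | i. i < N}"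
    and U_eq: "U = {i. i < N \<and> q i * (vnorm (R *\<^sub>v f i))\<^sup>2 = cmax}"
    and card_U: "2 \<le> card U"
    and pair_const: "\<And>i j. i < N \<Longrightarrow> j < N \<Longrightarrow> i \<noteq> j \<Longrightarrow>
                       q i * q j * (cmod ((R *\<^sub>v f i) \<bullet>c (R *\<^sub>v f j)))\<^sup>2 = \<kappa>"
begin

abbreviation "pnorm2 i \<equiv> (vnorm (R *\<^sub>v f i))\<^sup>2"

lemma U_less: "i \<in> U \<Longrightarrow> i < N"
  using U_subset by auto

lemma U_nonempty: "U \<noteq> {}"
  using card_U by auto

lemma two_in_U: obtains i j where "i \<in> U" "j \<in> U" "i \<noteq> j"
proof -
  obtain i where i: "i \<in> U" using U_nonempty by auto
  then have "card (U - {i}) \<noteq> 0" using card_U by simp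
  then obtain j where "j \<in> U - {i}" by (metis card.empty ex_in_conv)
  with i that show ?thesis by blast
qed

lemma U_minus_nonempty: "U - {j} \<noteq> {}"
proof
  assume "U - {j} = {}"
  then have "card U \<le> card {j}" by (intro card_mono) auto
  then show False using card_U by simp
qed

lemma weighted_pnorm2_le: "i < N \<Longrightarrow> q i * pnorm2 i \<le> cmax"
  unfolding cmax_eq by (rule Max_ge) auto

lemma pnorm2_U:
  assumes "i \<in> U"
  shows "pnorm2 i = cmax / q i"
proof -
  have "q i * pnorm2 i = cmax" "0 < q i" using assms U_eq weight_pos by auto
  then show ?thesis by (simp add: eq_divide_eq mult.commute)
qed

lemma kappa_nonneg: "0 \<le> \<kappa>"
proof -
  obtain i j where ij: "i \<in> U" "j \<in> U" "i \<noteq> j" by (rule two_in_U)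
  then have "0 < q i" "0 < q j" using weight_pos U_less by auto
  then show ?thesis unfolding pair_const[OF U_less[OF ij(1)] U_less[OF ij(2)] ij(3), symmetric] by simp
qed

lemma canon_dual_pair_product:
  assumes i: "i < N" and j: "j < N" and ij: "i \<noteq> j"
  shows "complex_of_real (q i * q j) * (canon_dual j \<bullet>c f i) * (canon_dual i \<bullet>c f j) = \<kappa>"
proof -
  have Rf: "R *\<^sub>v f i \<in> carrier_vec n" "R *\<^sub>v f j \<in> carrier_vec n"
    using inv_sqrt_carrier frame_carrier i j by auto
  have "(canon_dual j \<bullet>c f i) * (canon_dual i \<bullet>c f j)
      = cnj ((R *\<^sub>v f i) \<bullet>c (R *\<^sub>v f j)) * ((R *\<^sub>v f i) \<bullet>c (R *\<^sub>v f j))"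
    using i j by (simp add: canon_dual_cscalar_prod cscalar_prod_swap[OF Rf])
  also have "\<dots> = of_real ((cmod ((R *\<^sub>v f i) \<bullet>c (R *\<^sub>v f j)))\<^sup>2)"
    by (simp only: complex_norm_square mult.commute)
  finally show ?thesis by (simp add: pair_const[OF i j ij, symmetric] mult.assoc)
qed

lemma Rm1_canon_dual: "Rm n N p 1 f canon_dual = cmax"
proof (rule antisym)
  show "Rm n N p 1 f canon_dual \<le> cmax"
  proof (rule Rm_le)
    show "1 \<le> N" using U_nonempty U_less by fastforce
  next
    fix \<Lambda> assume "\<Lambda> \<subseteq> {..<N}" "card \<Lambda> = 1"
    then obtain i where \<Lambda>: "\<Lambda> = {i}" and i: "i < N" by (auto simp: card_Suc_eq)
    show "erasure_radius canon_dual \<Lambda> \<le> cmax"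
      using weighted_pnorm2_le[OF i] weight_pos[OF i]
      by (simp add: \<Lambda> erasure_radius_singleton[OF i canon_dual_carrier] canon_dual_diag[OF i]
          del: of_real_power)
  qed
next
  obtain i where iU: "i \<in> U" using U_nonempty by auto
  then have i: "i < N" by (rule U_less)
  have "cmax = erasure_radius canon_dual {i}"
    using iU weight_pos[OF i] U_eq
    by (simp add: erasure_radius_singleton[OF i canon_dual_carrier] canon_dual_diag[OF i] del: of_real_power)
  also have "\<dots> \<le> Rm n N p 1 f canon_dual" by (rule erasure_radius_le_Rm) (use i in auto)
  finally show "cmax \<le> Rm n N p 1 f canon_dual" .
qed

lemma weighted_diag_le_Rm1:
  assumes G: "is_dual K n N f G" and i: "i < N"
  shows "cmod (G i \<bullet>c f i) \<le> Rm n N p 1 f G / q i"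
proof -
  have "q i * cmod (G i \<bullet>c f i) \<le> Rm n N p 1 f G"
    using erasure_radius_le_Rm[of "{i}" 1 G] erasure_radius_singleton[OF i, of G] dual_carrier[OF G i] i by simp
  then show ?thesis using weight_pos[OF i] by (simp add: field_simps)
qed

lemma dual_diag_sum_U: "is_dual K n N f G \<Longrightarrow> (\<Sum>i\<in>U. G i \<bullet>c f i) = of_real (\<Sum>i\<in>U. cmax / q i)"
  using dual_diag_sum[OF _ canon_dual_is_dual]
  by (simp add: canon_dual_diag U_less pnorm2_U)

lemma Rm1_dual_ge:
  assumes G: "is_dual K n N f G"
  shows "cmax \<le> Rm n N p 1 f G"
proof -
  have "(\<Sum>i\<in>U. cmax / q i) = (\<Sum>i\<in>U. Re (G i \<bullet>c f i))"
    using arg_cong[OF dual_diag_sum_U[OF G], of Re] by simp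
  also have "\<dots> \<le> (\<Sum>i\<in>U. Rm n N p 1 f G / q i)"
    using weighted_diag_le_Rm1[OF G U_less] complex_Re_le_cmod order_trans by (blast intro: sum_mono)
  finally have "cmax * (\<Sum>i\<in>U. 1 / q i) \<le> Rm n N p 1 f G * (\<Sum>i\<in>U. 1 / q i)"
    by (simp add: sum_distrib_left)
  moreover have "0 < (\<Sum>i\<in>U. 1 / q i)"
    using weight_pos U_less U_nonempty by (intro sum_pos) auto
  ultimately show ?thesis by simp
qed

lemma canon_dual_opt1: "opt1_dual K n N p f canon_dual"
  unfolding opt1_dual_def Rm1_canon_dual
  by (intro conjI canon_dual_is_dual cInf_eq_minimum[symmetric])
    (use canon_dual_is_dual Rm1_canon_dual Rm1_dual_ge in auto)

lemma opt1_dual_Rm1: "opt1_dual K n N p f G \<Longrightarrow> Rm n N p 1 f G = cmax"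
  using canon_dual_opt1 Rm1_canon_dual unfolding opt1_dual_def by simp

lemma opt1_dual_diag:
  assumes G: "opt1_dual K n N p f G" and i: "i \<in> U"
  shows "G i \<bullet>c f i = of_real (cmax / q i)"
proof -
  have Gd: "is_dual K n N f G" using G unfolding opt1_dual_def by simp
  have bound: "cmod (G i \<bullet>c f i) \<le> cmax / q i" if "i \<in> U" for i
    using weighted_diag_le_Rm1[OF Gd U_less[OF that]] opt1_dual_Rm1[OF G] by simp
  have "(\<Sum>i\<in>U. cmax / q i - Re (G i \<bullet>c f i)) = 0"
    using arg_cong[OF dual_diag_sum_U[OF Gd], of Re] by (simp add: sum_subtractf)
  moreover have "\<forall>i\<in>U. 0 \<le> cmax / q i - Re (G i \<bullet>c f i)"
    using bound complex_Re_le_cmod order_trans by (metis diff_ge_0_iff_ge)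
  ultimately have re: "Re (G i \<bullet>c f i) = cmax / q i"
    using i by (simp add: sum_nonneg_eq_0_iff)
  then have "cmod (G i \<bullet>c f i) \<le> Re (G i \<bullet>c f i)" using bound[OF i] by simp
  then have "Im (G i \<bullet>c f i) = 0"
    using cmod_power2[of "G i \<bullet>c f i"] complex_Re_le_cmod[of "G i \<bullet>c f i"] by simp
  then show ?thesis using re by (simp add: complex_eq_iff)
qed

lemma Rm2_canon_dual_le: "Rm n N p 2 f canon_dual \<le> cmax + sqrt \<kappa>"
proof (rule Rm_le)
  show "2 \<le> N" using card_mono[OF _ U_subset] card_U by simp
next
  fix \<Lambda> assume "\<Lambda> \<subseteq> {..<N}" "card \<Lambda> = 2"
  then obtain i j where \<Lambda>: "\<Lambda> = {i,j}" and ij: "i \<noteq> j" and i: "i < N" and j: "j < N"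
    by (auto simp: card_2_iff)
  show "erasure_radius canon_dual \<Lambda> \<le> cmax + sqrt \<kappa>"
    unfolding \<Lambda>
    by (rule erasure_radius_pair_le[OF i j ij canon_dual_carrier canon_dual_carrier
          canon_dual_diag[OF i] canon_dual_diag[OF j] _ weighted_pnorm2_le[OF i] _ weighted_pnorm2_le[OF j]
          kappa_nonneg canon_dual_pair_product[OF i j ij]])
      (use weight_pos[OF i] weight_pos[OF j] in \<open>auto intro!: mult_nonneg_nonneg\<close>)
qed

lemma opt1_dual_cross_sum:
  assumes G: "opt1_dual K n N p f G" and j: "j \<in> U"
  shows "(\<Sum>i\<in>U - {j}. (G j \<bullet>c f i) * (G i \<bullet>c f j)) = of_real (cmax / q j) - (of_real (cmax / q j))\<^sup>2"
proof -
  have Gd: "is_dual K n N f G" using G unfolding opt1_dual_def by simp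
  have "G j \<bullet>c f j = (\<Sum>i\<in>U. (G j \<bullet>c f i) * (G i \<bullet>c f j))"
    by (rule dual_cross_sum_split[OF Gd j, symmetric])
  also have "\<dots> = (G j \<bullet>c f j) * (G j \<bullet>c f j) + (\<Sum>i\<in>U - {j}. (G j \<bullet>c f i) * (G i \<bullet>c f j))"
    by (rule sum.remove[OF finite_U j])
  finally have "G j \<bullet>c f j - (G j \<bullet>c f j)\<^sup>2 = (\<Sum>i\<in>U - {j}. (G j \<bullet>c f i) * (G i \<bullet>c f j))"
    unfolding power2_eq_square by (rule diff_eq_eq[THEN iffD2, OF trans[OF _ add.commute]])
  then show ?thesis unfolding opt1_dual_diag[OF G j] by (rule sym)
qed

lemma opt1_dual_pair_product_ge:
  assumes G: "opt1_dual K n N p f G" and j: "j \<in> U"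
  shows "\<exists>i\<in>U - {j}. \<kappa> \<le> q i * q j * Re ((G j \<bullet>c f i) * (G i \<bullet>c f j))"
proof (rule ccontr)
  \<comment> \<open>These products have the same sum over \<open>U - {j}\<close> for every 1-optimal dual, and for the canonical
      dual each of them equals \<open>\<kappa>\<close>.\<close>
  define x where "x i = (G j \<bullet>c f i) * (G i \<bullet>c f j)" for i
  define y where "y i = (canon_dual j \<bullet>c f i) * (canon_dual i \<bullet>c f j)" for i
  assume "\<not> ?thesis"
  then have less: "q i * q j * Re (x i) < \<kappa>" if "i \<in> U - {j}" for i
    using that unfolding x_def by (simp add: not_le)
  have eq: "q i * q j * Re (y i) = \<kappa>" if "i \<in> U - {j}" for i
    using arg_cong[OF canon_dual_pair_product[of i j], of Re] U_less that j
    unfolding y_def by (simp add: mult.assoc)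
  have "Re (x i) < Re (y i)" if i: "i \<in> U - {j}" for i
  proof -
    have "0 < q i * q j" using weight_pos U_less i j by auto
    then show ?thesis
      by (rule mult_less_cancel_left_pos[THEN iffD1]) (use less[OF i] eq[OF i] in linarith)
  qed
  then have "(\<Sum>i\<in>U - {j}. Re (x i)) < (\<Sum>i\<in>U - {j}. Re (y i))"
    using U_minus_nonempty by (intro sum_strict_mono) auto
  moreover have "sum x (U - {j}) = sum y (U - {j})"
    using opt1_dual_cross_sum[OF G j] opt1_dual_cross_sum[OF canon_dual_opt1 j]
    unfolding x_def y_def by simp
  then have "(\<Sum>i\<in>U - {j}. Re (x i)) = (\<Sum>i\<in>U - {j}. Re (y i))"
    by (simp only: Re_sum[symmetric])
  ultimately show False by simp
qed

lemma Rm2_opt1_dual_ge: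
  assumes G: "opt1_dual K n N p f G"
  shows "cmax + sqrt \<kappa> \<le> Rm n N p 2 f G"
proof -
  have Gd: "is_dual K n N f G" using G unfolding opt1_dual_def by simp
  obtain j where j: "j \<in> U" using U_nonempty by auto
  obtain i where i: "i \<in> U" and ij: "i \<noteq> j"
    and "\<kappa> \<le> q i * q j * Re ((G j \<bullet>c f i) * (G i \<bullet>c f j))"
    using opt1_dual_pair_product_ge[OF G j] by blast
  then have ky: "\<kappa> \<le> Re (complex_of_real (q i * q j) * (G j \<bullet>c f i) * (G i \<bullet>c f j))"
    by (simp add: mult.assoc)
  have "cmax + sqrt \<kappa> \<le> erasure_radius G {i,j}"
    by (rule erasure_radius_pair_ge[OF U_less[OF i] U_less[OF j] ij dual_carrier[OF Gd U_less[OF i]]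
          dual_carrier[OF Gd U_less[OF j]] opt1_dual_diag[OF G i] opt1_dual_diag[OF G j] kappa_nonneg ky])
  also have "\<dots> \<le> Rm n N p 2 f G" using U_less i j ij by (intro erasure_radius_le_Rm) auto
  finally show ?thesis .
qed

lemma canon_dual_opt2: "opt2_dual K n N p f canon_dual"
  unfolding opt2_dual_def
proof (intro conjI canon_dual_opt1 cInf_eq_minimum[symmetric])
  show "Rm n N p 2 f canon_dual \<in> (\<lambda>G. Rm n N p 2 f G) ` {G. opt1_dual K n N p f G}"
    using canon_dual_opt1 by auto
next
  fix x assume "x \<in> (\<lambda>G. Rm n N p 2 f G) ` {G. opt1_dual K n N p f G}"
  then show "Rm n N p 2 f canon_dual \<le> x" using Rm2_canon_dual_le Rm2_opt1_dual_ge by force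
qed

end

lemma weight_num_pos:
  assumes prob: "prob_seq N p" and welldef: "\<forall>i<N. (\<Sum>j<N. p j) - p i \<noteq> 0"
    and N: "2 \<le> N" and n: "0 < n" and i: "i < N"
  shows "0 < weight_num n N p i"
proof -
  have sum: "(\<Sum>j<N. p j) = 1" and "p i \<le> 1" using prob i unfolding prob_seq_def by auto
  then have "0 < (\<Sum>j<N. p j) - p i" using welldef i by force
  then show ?thesis using N n sum unfolding weight_num_def by simp
qed

theorem corollary3p1:
  fixes K :: "complex set" and n N :: nat and p :: "nat \<Rightarrow> real" and f :: "nat \<Rightarrow> complex vec"
  defines "q \<equiv> weight_num n N p"
      and "R \<equiv> inv_sqrt_mat n (frame_op n N f)"
  defines "c \<equiv> Max {q i * (vnorm (R *\<^sub>v f i))^2 | i. i < N}"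
  defines "U1 \<equiv> {i. i < N \<and> q i * (vnorm (R *\<^sub>v f i))^2 = c}"
  defines "U2 \<equiv> {..<N} - U1"
  assumes K: "K = \<real> \<or> K = UNIV"
    and n: "0 < n" and nN: "n \<le> N"
    and frame: "is_frame K n N f"
    and prob: "prob_seq N p"
    and welldef: "\<forall>i<N. (\<Sum>j<N. p j) - p i \<noteq> 0"
    and disj: "spanK K n f U1 \<inter> spanK K n f U2 = {0\<^sub>v n}"
    and card: "card U1 \<ge> 2"
    and eq: "\<forall>i<N. \<forall>j<N. i \<noteq> j \<longrightarrow>
        cmod ((R *\<^sub>v f i) \<bullet>c (R *\<^sub>v f j)) =
        sqrt (1 / (q i * q j) * ((real n - (\<Sum>k<N. 1 / (q k)^2))
                                  / (\<Sum>r<N. \<Sum>s<N. if r \<noteq> s then 1 / (q r * q s) else 0)))"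
  shows "opt2_dual K n N p f (\<lambda>i. mat_inv n (frame_op n N f) *\<^sub>v f i)"
proof -
  have U1_subset: "U1 \<subseteq> {..<N}" unfolding U1_def by auto
  have "2 \<le> N" using card card_mono[OF _ U1_subset] by simp
  then have q_pos: "\<And>i. i < N \<Longrightarrow> 0 < q i"
    unfolding q_def using weight_num_pos[OF prob welldef _ n] by blast
  define \<kappa> where "\<kappa> = (real n - (\<Sum>k<N. 1 / (q k)\<^sup>2))
                         / (\<Sum>r<N. \<Sum>s<N. if r \<noteq> s then 1 / (q r * q s) else 0)"
  have pair_const: "q i * q j * (cmod ((R *\<^sub>v f i) \<bullet>c (R *\<^sub>v f j)))\<^sup>2 = \<kappa>"
    if "i < N" "j < N" "i \<noteq> j" for i j
  proof -
    have norm: "cmod ((R *\<^sub>v f i) \<bullet>c (R *\<^sub>v f j)) = sqrt (1 / (q i * q j) * \<kappa>)"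
      using eq that unfolding \<kappa>_def by blast
    then have "0 \<le> 1 / (q i * q j) * \<kappa>" by (metis norm_ge_zero real_sqrt_ge_0_iff)
    then show ?thesis using q_pos[OF that(1)] q_pos[OF that(2)] by (simp add: norm)
  qed
  interpret optimal_setting K n N f U1 p c \<kappa>
    using K frame n q_pos U1_subset disj card pair_const
    by unfold_locales (simp_all add: q_def R_def c_def U1_def U2_def)
  show ?thesis by (rule canon_dual_opt2)
qed

end
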